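(* Let $1\le k\le n-1$. Then $\mathrm{Ker}\,R_{n-k}^* = \mathrm{Ker}\,(R_k^*\circ I)$, as subspaces of $\mathcal{M}(G(n,n-k))$.
   Context: $G(n,m)$ is the Grassmannian of $m$-dimensional subspaces of $\mathbb{R}^n$. For $E\in G(n,m)$, $R_mf(E)=\int_{S^{n-1}\cap E}f\,d\sigma_E$ ($\sigma_E$ Haar probability on $S^{n-1}\cap E$), $R_m:C(S^{n-1})\to C(G(n,m))$, and $R_m^*:\mathcal{M}(G(n,m))\to\mathcal{M}(S^{n-1})$ is its dual on signed finite Borel measures. $I:\mathcal{M}(G(n,n-k))\to\mathcal{M}(G(n,k))$ is $I(\mu)=\mu^\perp$, $\mu^\perp(A)=\mu(\{E^\perp:E\in A\})$. *)

theory Defs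
  imports "HOL-Analysis.Analysis"
begin

text \<open>Ambient space: a Euclidean space 'a with n = DIM('a).\<close>

definition grass :: "nat \<Rightarrow> ('a::euclidean_space) set set" where
  "grass m = {E. subspace E \<and> dim E = m}"

text \<open>Standard metric on the Grassmannian: Hausdorff distance of the unit balls.\<close>
definition gdist :: "('a::euclidean_space) set \<Rightarrow> 'a set \<Rightarrow> real" where
  "gdist E F = max (SUP x\<in>cball 0 1 \<inter> E. infdist x (cball 0 1 \<inter> F))
                   (SUP y\<in>cball 0 1 \<inter> F. infdist y (cball 0 1 \<inter> E))"

definition grass_open :: "nat \<Rightarrow> ('a::euclidean_space) set set \<Rightarrow> bool" where
  "grass_open m U \<longleftrightarrow> U \<subseteq> grass m \<and>
     (\<forall>E\<in>U. \<exists>e>0. \<forall>F\<in>grass m. gdist E F < e \<longrightarrow> F \<in> U)"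

definition grass_borel :: "nat \<Rightarrow> ('a::euclidean_space) set measure" where
  "grass_borel m = sigma (grass m) {U. grass_open m U}"

text \<open>Signed finite Borel measures on a measurable space, represented as pairs
  (M1, M2) of finite measures standing for M1 - M2.\<close>
definition signed_measures :: "'b measure \<Rightarrow> ('b measure \<times> 'b measure) set" where
  "signed_measures S = {(M1, M2). finite_measure M1 \<and> finite_measure M2 \<and>
                                   sets M1 = sets S \<and> sets M2 = sets S}"

definition signed_integral :: "('b measure \<times> 'b measure) \<Rightarrow> ('b \<Rightarrow> real) \<Rightarrow> real" where
  "signed_integral \<mu> g = (\<integral>x. g x \<partial>(fst \<mu>)) - (\<integral>x. g x \<partial>(snd \<mu>))"

definition haar_sphere :: "('a::euclidean_space) set \<Rightarrow> 'a measure" where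
  "haar_sphere E = (THE \<sigma>. sets \<sigma> = sets (restrict_space borel (sphere 0 1 \<inter> E)) \<and>
       emeasure \<sigma> (space \<sigma>) = 1 \<and>
       (\<forall>T. orthogonal_transformation T \<and> T ` E = E \<longrightarrow> distr \<sigma> \<sigma> T = \<sigma>))"

definition radon :: "(('a::euclidean_space) \<Rightarrow> real) \<Rightarrow> 'a set \<Rightarrow> real" where
  "radon f E = (\<integral>x. f x \<partial>(haar_sphere E))"

text \<open>Kernel of the dual R_m^*: \<mu> with R_m^* \<mu> = 0, i.e. (by definition of the dual)
  \<langle>\<mu>, R_m f\<rangle> = 0 for every f \<in> C(S^{n-1}).\<close>
definition ker_Rstar :: "nat \<Rightarrow> (('a::euclidean_space) set measure \<times> 'a set measure) set" where
  "ker_Rstar m = {\<mu> \<in> signed_measures (grass_borel m).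
      \<forall>f::'a \<Rightarrow> real. continuous_on (sphere 0 1) f \<longrightarrow> signed_integral \<mu> (radon f) = 0}"

text \<open>I(\<mu>) = \<mu>^\<perp>: push-forward of \<mu> on G(n,n-k) under E \<mapsto> E^\<perp>, a measure on G(n,k).\<close>
definition perp_measure :: "nat \<Rightarrow> (('a::euclidean_space) set measure \<times> 'a set measure)
                               \<Rightarrow> ('a set measure \<times> 'a set measure)" where
  "perp_measure k \<mu> = (distr (fst \<mu>) (grass_borel k) orthogonal_comp,
                       distr (snd \<mu>) (grass_borel k) orthogonal_comp)"

end

theory Submission
  imports Defs "HOL-Probability.Probability_Measure"
begin

(* For f(z) = exp (z \<bullet> a), the integral of f over the unit sphere of E is a power series in
   |P_E a| whose odd coefficients vanish and whose even coefficients, the moments of \<sigma>_E, are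
   positive and depend only on dim E.  As exponential sums are dense in C(S^{n-1})
   (Stone-Weierstrass), \<mu> lies in Ker R_m^* iff the integrals of |P_E a|^(2d) d\<mu>(E) vanish for all
   a and d.  Since |P_(E^\<perp>) a|^2 = |a|^2 - |P_E a|^2, the binomial theorem makes these moment
   conditions for \<mu> and for \<mu>^\<perp> equivalent.

   The invariant measure \<sigma>_E is obtained by radially projecting the uniform measure on the unit
   ball onto the sphere of E; its uniqueness, needed to evaluate the definite description in
   haar_sphere, follows by comparing integrals of exponentials with Fubini's theorem and
   reflections, which act transitively on the sphere. *)

section \<open>Orthogonal projection onto a subspace\<close>

definition proj :: "'a::euclidean_space set \<Rightarrow> 'a \<Rightarrow> 'a" where
  "proj E a = (THE y. y \<in> E \<and> a - y \<in> orthogonal_comp E)"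

lemma proj_ex1:
  fixes E :: "'a::euclidean_space set"
  assumes "subspace E"
  shows "\<exists>!y. y \<in> E \<and> a - y \<in> orthogonal_comp E"
proof -
  obtain y z where "y \<in> E" "z \<in> orthogonal_comp E" "a = y + z"
    using subspace_sum_orthogonal_comp[OF assms] by (metis UNIV_I set_plus_elim)
  then have ex: "y \<in> E \<and> a - y \<in> orthogonal_comp E" by simp
  show ?thesis
  proof (rule ex1I[of _ y])
    show "y \<in> E \<and> a - y \<in> orthogonal_comp E" by (fact ex)
    fix y' assume y': "y' \<in> E \<and> a - y' \<in> orthogonal_comp E"
    have "y - y' \<in> E" using ex y' assms by (simp add: subspace_diff)
    moreover have "(a - y') - (a - y) \<in> orthogonal_comp E"
      using ex y' subspace_diff[OF subspace_orthogonal_comp] by blast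
    ultimately have "y - y' \<in> E \<inter> orthogonal_comp E" by simp
    then show "y' = y" using orthogonal_Int_0[OF assms] by auto
  qed
qed

lemma proj_in:
  assumes "subspace E" shows "proj E a \<in> E"
  using theI'[OF proj_ex1[OF assms, of a]] unfolding proj_def by blast

lemma proj_perp:
  assumes "subspace E" shows "a - proj E a \<in> orthogonal_comp E"
  using theI'[OF proj_ex1[OF assms, of a]] unfolding proj_def by blast

lemma proj_unique:
  assumes "subspace E" "y \<in> E" "a - y \<in> orthogonal_comp E"
  shows "proj E a = y"
  using proj_ex1[OF assms(1), of a] proj_in[OF assms(1), of a] proj_perp[OF assms(1), of a] assms
  by blast

lemma proj_self: assumes "subspace E" "x \<in> E" shows "proj E x = x"
  using proj_unique[OF assms] by (simp add: subspace_0[OF subspace_orthogonal_comp])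

lemma orthogonal_compD: "x \<in> orthogonal_comp E \<Longrightarrow> y \<in> E \<Longrightarrow> y \<bullet> x = 0"
  by (auto simp: orthogonal_comp_def orthogonal_def)

lemma inner_proj:
  assumes "subspace E" "x \<in> E" shows "x \<bullet> proj E a = x \<bullet> a"
  using orthogonal_compD[OF proj_perp[OF assms(1)] assms(2)] by (simp add: inner_diff_right)

lemma proj_eq_0_iff:
  assumes "subspace E" shows "proj E a = 0 \<longleftrightarrow> a \<in> orthogonal_comp E"
  using proj_perp[OF assms, of a] proj_unique[OF assms subspace_0[OF assms], of a] by auto

lemma linear_proj: assumes "subspace E" shows "linear (proj E)"
proof (rule linearI)
  fix x y
  show "proj E (x + y) = proj E x + proj E y"
  proof (rule proj_unique[OF assms])
    show "proj E x + proj E y \<in> E" by (simp add: assms proj_in subspace_add)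
    have "(x - proj E x) + (y - proj E y) \<in> orthogonal_comp E"
      by (simp add: assms proj_perp subspace_add subspace_orthogonal_comp)
    then show "x + y - (proj E x + proj E y) \<in> orthogonal_comp E" by (simp add: algebra_simps)
  qed
next
  fix c :: real and x
  show "proj E (c *\<^sub>R x) = c *\<^sub>R proj E x"
  proof (rule proj_unique[OF assms])
    show "c *\<^sub>R proj E x \<in> E" by (simp add: assms proj_in subspace_scale)
    have "c *\<^sub>R (x - proj E x) \<in> orthogonal_comp E"
      by (simp add: assms proj_perp subspace_scale subspace_orthogonal_comp)
    then show "c *\<^sub>R x - c *\<^sub>R proj E x \<in> orthogonal_comp E" by (simp add: algebra_simps)
  qed
qed

lemma proj_orthogonal_comp:
  fixes E :: "'a::euclidean_space set"
  assumes "subspace E" shows "proj (orthogonal_comp E) a = a - proj E a"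
proof (rule proj_unique[OF subspace_orthogonal_comp])
  show "a - proj E a \<in> orthogonal_comp E" by (rule proj_perp[OF assms])
  have "proj E a \<in> orthogonal_comp (orthogonal_comp E)"
    using proj_in[OF assms] orthogonal_comp_subset by blast
  then show "a - (a - proj E a) \<in> orthogonal_comp (orthogonal_comp E)" by simp
qed

lemma norm_proj_Pythagorean:
  assumes "subspace E"
  shows "(norm a)\<^sup>2 = (norm (proj E a))\<^sup>2 + (norm (a - proj E a))\<^sup>2"
proof -
  have "orthogonal (proj E a) (a - proj E a)"
    using orthogonal_compD[OF proj_perp[OF assms] proj_in[OF assms]] by (simp add: orthogonal_def)
  then show ?thesis using norm_add_Pythagorean by fastforce
qed

lemma norm_proj_le: assumes "subspace E" shows "norm (proj E a) \<le> norm a"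
proof -
  have "(norm (proj E a))\<^sup>2 \<le> (norm a)\<^sup>2" using norm_proj_Pythagorean[OF assms, of a] by simp
  then show ?thesis using power2_le_imp_le by force
qed

lemma norm_proj_orthogonal_comp:
  fixes E :: "'a::euclidean_space set"
  assumes "subspace E"
  shows "(norm (proj (orthogonal_comp E) a))\<^sup>2 = (norm a)\<^sup>2 - (norm (proj E a))\<^sup>2"
  using norm_proj_Pythagorean[OF assms, of a] proj_orthogonal_comp[OF assms] by simp

lemma borel_measurable_proj: assumes "subspace E" shows "proj E \<in> borel_measurable borel"
  using linear_continuous_on[OF linear_conv_bounded_linear[THEN iffD1, OF linear_proj[OF assms]]]
  by (rule borel_measurable_continuous_onI)

lemma proj_scaled_in_sphere:
  assumes "subspace E" "proj E a \<noteq> 0"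
  shows "proj E a /\<^sub>R norm (proj E a) \<in> sphere 0 1 \<inter> E"
  using assms proj_in[OF assms(1), of a] by (simp add: subspace_scale)

lemma dim_add_dim_orthogonal_comp:
  fixes E :: "'a::euclidean_space set"
  assumes "subspace E"
  shows "dim E + dim (orthogonal_comp E) = DIM('a)"
proof -
  have "{x + y |x y. x \<in> E \<and> y \<in> orthogonal_comp E} = UNIV"
    using subspace_sum_orthogonal_comp[OF assms] unfolding set_plus_def by blast
  moreover have "dim {x + y |x y. x \<in> E \<and> y \<in> orthogonal_comp E} + dim (E \<inter> orthogonal_comp E) =
      dim E + dim (orthogonal_comp E)"
    by (rule dim_sums_Int[OF assms subspace_orthogonal_comp])
  ultimately show ?thesis by (simp add: orthogonal_Int_0[OF assms])
qed

lemma orthogonal_comp_in_grass: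
  fixes E :: "'a::euclidean_space set"
  assumes "E \<in> grass m"
  shows "orthogonal_comp E \<in> grass (DIM('a) - m)"
  using assms dim_add_dim_orthogonal_comp[of E] subspace_orthogonal_comp[of E]
  by (auto simp: grass_def)

lemma grass_nonempty:
  assumes "j \<le> DIM('a)"
  obtains F :: "'a::euclidean_space set" where "F \<in> grass j"
proof -
  obtain B where B: "B \<subseteq> (Basis :: 'a set)" "card B = j"
    using obtain_subset_with_card_n[of j "Basis :: 'a set"] assms by auto
  have "independent B" using B(1) independent_Basis by (rule independent_mono[rotated])
  then have "dim (span B) = j" using B(2) dim_span_eq_card_independent by metis
  then show ?thesis using that[of "span B"] by (simp add: grass_def subspace_span)
qed

lemma orthogonal_transformation_between_subspaces:
  fixes E F :: "'a::euclidean_space set"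
  assumes E: "subspace E" and F: "subspace F" and d: "dim E = dim F"
  obtains U where "orthogonal_transformation U" "U ` E = F"
proof -
  obtain f where f: "linear f" "f ` E = F" "\<And>x. x \<in> E \<Longrightarrow> norm (f x) = norm x"
    using isometries_subspaces[OF E F d] by metis
  have d2: "dim (orthogonal_comp E) = dim (orthogonal_comp F)"
    using dim_add_dim_orthogonal_comp[OF E] dim_add_dim_orthogonal_comp[OF F] d by simp
  obtain f' where f': "linear f'" "f' ` orthogonal_comp E = orthogonal_comp F"
                    "\<And>x. x \<in> orthogonal_comp E \<Longrightarrow> norm (f' x) = norm x"
    using isometries_subspaces[OF subspace_orthogonal_comp subspace_orthogonal_comp d2] by metis
  define U where "U x = f (proj E x) + f' (x - proj E x)" for x
  have lin: "linear U"
  proof -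
    have "linear (\<lambda>x. x - proj E x)"
      using linear_proj[OF E] by (simp add: linear_compose_sub linear_id[unfolded id_def])
    then show ?thesis unfolding U_def[abs_def]
      using linear_compose[OF linear_proj[OF E] f(1)] linear_compose[OF _ f'(1)]
      by (intro linear_compose_add) (auto simp: o_def)
  qed
  have "norm (U x) = norm x" for x
  proof -
    have "f (proj E x) \<in> F" "f' (x - proj E x) \<in> orthogonal_comp F"
      using f(2) proj_in[OF E] f'(2) proj_perp[OF E] by blast+
    then have "orthogonal (f (proj E x)) (f' (x - proj E x))"
      using orthogonal_compD by (simp add: orthogonal_def)
    then have "(norm (U x))\<^sup>2 = (norm (f (proj E x)))\<^sup>2 + (norm (f' (x - proj E x)))\<^sup>2"
      unfolding U_def by (rule norm_add_Pythagorean)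
    also have "\<dots> = (norm (proj E x))\<^sup>2 + (norm (x - proj E x))\<^sup>2"
      using f(3)[OF proj_in[OF E]] f'(3)[OF proj_perp[OF E]] by simp
    also have "\<dots> = (norm x)\<^sup>2" by (rule norm_proj_Pythagorean[OF E, symmetric])
    finally show ?thesis by simp
  qed
  then have "orthogonal_transformation U" using lin by (simp add: orthogonal_transformation)
  moreover have "U ` E = F"
    using f(2) proj_self[OF E] linear_0[OF f'(1)] by (force simp: U_def image_iff)
  ultimately show ?thesis using that by blast
qed

lemma orthogonal_transformation_inner:
  "orthogonal_transformation (T :: 'a::euclidean_space \<Rightarrow> 'a) \<Longrightarrow> T x \<bullet> T y = x \<bullet> y"
  by (simp add: orthogonal_transformation_def)

lemma proj_orthogonal_transformation:
  fixes T :: "'a::euclidean_space \<Rightarrow> 'a"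
  assumes E: "subspace E" and T: "orthogonal_transformation T" and TE: "T ` E = E"
  shows "proj E (T x) = T (proj E x)"
proof (rule proj_unique[OF E])
  show "T (proj E x) \<in> E" using TE proj_in[OF E] by blast
  have "y \<bullet> T (x - proj E x) = 0" if "y \<in> E" for y
  proof -
    obtain w where "w \<in> E" "y = T w" using TE \<open>y \<in> E\<close> by blast
    then show ?thesis
      using orthogonal_compD[OF proj_perp[OF E]] orthogonal_transformation_inner[OF T] by simp
  qed
  then have "T (x - proj E x) \<in> orthogonal_comp E"
    by (auto simp: orthogonal_comp_def orthogonal_def)
  then show "T x - T (proj E x) \<in> orthogonal_comp E"
    using linear_diff[OF orthogonal_transformation_linear[OF T]] by simp
qed

lemma borel_measurable_orthogonal_transformation:
  "orthogonal_transformation (T :: 'a::euclidean_space \<Rightarrow> 'a) \<Longrightarrow> T \<in> borel_measurable borel"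
  using linear_continuous_on[OF linear_conv_bounded_linear[THEN iffD1, OF orthogonal_transformation_linear]]
  by (rule borel_measurable_continuous_onI)

lemma measurable_orthogonal_transformation_sphere:
  fixes T :: "'a::euclidean_space \<Rightarrow> 'a"
  assumes T: "orthogonal_transformation T" and TE: "T ` E = F"
  shows "T \<in> measurable (restrict_space borel (sphere 0 1 \<inter> E)) (restrict_space borel (sphere 0 1 \<inter> F))"
  by (rule measurable_restrict_space3[OF borel_measurable_orthogonal_transformation[OF T]])
     (use TE T in \<open>auto simp: orthogonal_transformation_norm\<close>)

section \<open>Rotation invariance of Lebesgue measure\<close>

lemma emeasure_lborel_ball_translation:
  fixes c d :: "'a::euclidean_space"
  shows "emeasure lborel (ball c r) = emeasure lborel (ball d r)"
proof (cases "r \<ge> 0")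
  case True
  have "emeasure lborel (ball c r) = ennreal (r ^ DIM('a)) * emeasure lebesgue (ball (0 :: 'a) 1)"
    using emeasure_lebesgue_ball_conv_unit_ball[OF True, of c] by simp
  also have "\<dots> = emeasure lborel (ball d r)"
    using emeasure_lebesgue_ball_conv_unit_ball[OF True, of d] by simp
  finally show ?thesis .
qed (simp add: ball_empty)

lemma negligible_borel_imp_null_sets:
  fixes N :: "'a::euclidean_space set"
  assumes "negligible N" "N \<in> sets borel"
  shows "N \<in> null_sets lborel"
  using assms negligible_iff_null_sets null_sets_completion_iff by (metis sets_lborel)

lemma open_Vitali_ball_cover:
  fixes U :: "'a::euclidean_space set"
  assumes U: "open U"
  obtains C where "countable C" "\<And>c r. (c, r) \<in> C \<Longrightarrow> ball c r \<subseteq> U"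
    "disjoint_family_on (\<lambda>(c, r). ball c r) C"
    "U - (\<Union>(c, r)\<in>C. ball c r) \<in> null_sets lborel"
proof -
  define K where "K = {(c, r::real). 0 < r \<and> ball c r \<subseteq> U}"
  have cover: "\<exists>i. i \<in> K \<and> x \<in> ball (fst i) (snd i) \<and> snd i < d" if "x \<in> U" "0 < d" for x d
  proof -
    obtain e where e: "e > 0" "ball x e \<subseteq> U" using U \<open>x \<in> U\<close> open_contains_ball by blast
    then have "(x, min e (d/2)) \<in> K" using \<open>0 < d\<close> by (auto simp: K_def)
    then show ?thesis using e \<open>0 < d\<close> by force
  qed
  obtain C where C: "countable C" "C \<subseteq> K"
     "pairwise (\<lambda>i j. disjnt (ball (fst i) (snd i)) (ball (fst j) (snd j))) C"
     "negligible (U - (\<Union>i \<in> C. ball (fst i) (snd i)))"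
    by (rule Vitali_covering_theorem_balls[of U K fst snd, OF cover])
  show ?thesis
  proof (rule that[OF C(1)])
    show "ball c r \<subseteq> U" if "(c, r) \<in> C" for c r using that C(2) by (auto simp: K_def)
    show "disjoint_family_on (\<lambda>(c, r). ball c r) C"
      using C(3) unfolding disjoint_family_on_def pairwise_def disjnt_def case_prod_beta by blast
    have "open (\<Union>(c, r)\<in>C. ball c r)" by (auto simp: case_prod_beta)
    then have "U - (\<Union>(c, r)\<in>C. ball c r) \<in> sets borel" using U by (intro sets.Diff borel_open)
    then show "U - (\<Union>(c, r)\<in>C. ball c r) \<in> null_sets lborel"
      using C(4) by (intro negligible_borel_imp_null_sets) (simp_all add: case_prod_beta)
  qed
qed

lemma open_orthogonal_image:
  fixes T :: "'a::euclidean_space \<Rightarrow> 'a"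
  assumes "orthogonal_transformation T" "open U"
  shows "open (T ` U)"
  using open_bijective_linear_image_eq[OF orthogonal_transformation_linear orthogonal_transformation_bij] assms
  by blast

(* The library's measure_orthogonal_image only covers real^'n.  Here U is, up to a null set, a
   disjoint union of balls (Vitali), and T maps each ball to a ball of the same measure. *)
lemma emeasure_lborel_le_orthogonal_image:
  fixes T :: "'a::euclidean_space \<Rightarrow> 'a"
  assumes T: "orthogonal_transformation T" and U: "open U"
  shows "emeasure lborel U \<le> emeasure lborel (T ` U)"
proof -
  obtain C where C: "countable C" "\<And>c r. (c, r) \<in> C \<Longrightarrow> ball c r \<subseteq> U"
    and disj: "disjoint_family_on (\<lambda>(c, r). ball c r) C"
    and null: "U - (\<Union>(c, r)\<in>C. ball c r) \<in> null_sets lborel"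
    using open_Vitali_ball_cover[OF U] by blast
  define B :: "'a \<times> real \<Rightarrow> 'a set" where "B = (\<lambda>(c, r). ball c r)"
  define B' :: "'a \<times> real \<Rightarrow> 'a set" where "B' = (\<lambda>(c, r). ball (T c) r)"
  have B'_eq: "B' i = T ` B i" for i
    using image_orthogonal_transformation_ball[OF T] by (simp add: B_def B'_def split: prod.splits)
  have disj': "disjoint_family_on B' C"
    using disj orthogonal_transformation_inj[OF T] unfolding disjoint_family_on_def B'_eq B_def
    by (metis image_empty image_Int)
  have "emeasure lborel U = emeasure lborel ((\<Union>i\<in>C. B i) \<union> (U - (\<Union>i\<in>C. B i)))"
    using C(2) by (intro arg_cong[where f="emeasure lborel"]) (auto simp: B_def)
  also have "\<dots> = emeasure lborel (\<Union>i\<in>C. B i)"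
  proof (rule emeasure_Un_null_set)
    have "open (\<Union>i\<in>C. B i)" by (auto simp: B_def case_prod_beta)
    then show "(\<Union>i\<in>C. B i) \<in> sets lborel" by simp
  qed (use null in \<open>simp add: B_def\<close>)
  also have "\<dots> = (\<integral>\<^sup>+i. emeasure lborel (B i) \<partial>count_space C)"
    using disj by (intro emeasure_UN_countable[OF _ C(1)]) (auto simp: B_def)
  also have "\<dots> = (\<integral>\<^sup>+i. emeasure lborel (B' i) \<partial>count_space C)"
    unfolding B_def B'_def case_prod_beta by (metis emeasure_lborel_ball_translation)
  also have "\<dots> = emeasure lborel (\<Union>i\<in>C. B' i)"
    by (rule emeasure_UN_countable[OF _ C(1) disj', symmetric]) (auto simp: B'_def)
  also have "\<dots> \<le> emeasure lborel (T ` U)"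
    using C(2) open_orthogonal_image[OF T U] unfolding B'_eq
    by (intro emeasure_mono) (auto simp: B_def)
  finally show ?thesis .
qed

lemma emeasure_lborel_orthogonal_image:
  fixes T :: "'a::euclidean_space \<Rightarrow> 'a"
  assumes T: "orthogonal_transformation T" and U: "open U"
  shows "emeasure lborel (T ` U) = emeasure lborel U"
proof (rule antisym)
  have "emeasure lborel (T ` U) \<le> emeasure lborel (inv T ` T ` U)"
    by (rule emeasure_lborel_le_orthogonal_image[OF orthogonal_transformation_inv[OF T]
          open_orthogonal_image[OF T U]])
  then show "emeasure lborel (T ` U) \<le> emeasure lborel U"
    using orthogonal_transformation_inj[OF T] by (simp add: image_image)
qed (rule emeasure_lborel_le_orthogonal_image[OF T U])

lemma distr_lborel_orthogonal_transformation:
  fixes T :: "'a::euclidean_space \<Rightarrow> 'a"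
  assumes T: "orthogonal_transformation T"
  shows "distr lborel borel T = lborel"
proof (rule measure_eqI_generator_eq[where E="{S. open S}" and \<Omega>=UNIV and A="\<lambda>i. ball 0 (real i)"])
  have Tm: "T \<in> borel_measurable borel" by (rule borel_measurable_orthogonal_transformation[OF T])
  have *: "emeasure (distr lborel borel T) X = emeasure lborel X" if "open X" for X
  proof -
    have "T -` X = inv T ` X"
      using orthogonal_transformation_bij[OF T] by (simp add: bij_vimage_eq_inv_image)
    then show ?thesis
      using that Tm emeasure_lborel_orthogonal_image[OF orthogonal_transformation_inv[OF T] that]
      by (simp add: emeasure_distr)
  qed
  then show "emeasure (distr lborel borel T) X = emeasure lborel X" if "X \<in> {S. open S}" for X
    using that by simp
  show "emeasure (distr lborel borel T) (ball 0 (real i)) \<noteq> \<infinity>" for i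
    using *[of "ball 0 (real i)"] emeasure_lborel_ball_finite by (simp add: less_top)
  show "(\<Union>i. ball (0::'a) (real i)) = UNIV"
    by (auto simp: dist_norm) (metis reals_Archimedean2)
  show "Int_stable {S :: 'a set. open S}" by (auto simp: Int_stable_def)
  show "sets (distr lborel borel T) = sigma_sets UNIV {S. open S}" by (simp add: sets_borel)
  show "sets lborel = sigma_sets UNIV {S :: 'a set. open S}" by (simp add: sets_borel)
qed auto

section \<open>An invariant probability measure on the sphere of a subspace\<close>

definition invariant_sphere_measure :: "'a::euclidean_space set \<Rightarrow> 'a measure \<Rightarrow> bool" where
  "invariant_sphere_measure E \<sigma> \<longleftrightarrow> sets \<sigma> = sets (restrict_space borel (sphere 0 1 \<inter> E)) \<and>
       emeasure \<sigma> (space \<sigma>) = 1 \<and>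
       (\<forall>T. orthogonal_transformation T \<and> T ` E = E \<longrightarrow> distr \<sigma> \<sigma> T = \<sigma>)"

lemma haar_sphere_eq_The: "haar_sphere E = (THE \<sigma>. invariant_sphere_measure E \<sigma>)"
  unfolding haar_sphere_def invariant_sphere_measure_def ..

definition unit_ball_measure :: "'a::euclidean_space measure" where
  "unit_ball_measure = uniform_measure lborel (ball 0 1)"

definition sphere_point :: "'a::euclidean_space set \<Rightarrow> 'a" where
  "sphere_point E = (SOME e. e \<in> sphere 0 1 \<inter> E)"

(* The junk value sphere_point E is taken only on the null set E\<^sup>\<bottom>. *)
definition radial_proj :: "'a::euclidean_space set \<Rightarrow> 'a \<Rightarrow> 'a" where
  "radial_proj E x = (if proj E x = 0 then sphere_point E else proj E x /\<^sub>R norm (proj E x))"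

definition radial_sphere_measure :: "'a::euclidean_space set \<Rightarrow> 'a measure" where
  "radial_sphere_measure E =
     distr unit_ball_measure (restrict_space borel (sphere 0 1 \<inter> E)) (radial_proj E)"

lemma sphere_point_in:
  fixes E :: "'a::euclidean_space set"
  assumes E: "subspace E" and d: "dim E \<ge> 1"
  shows "sphere_point E \<in> sphere 0 1 \<inter> E"
proof -
  have "\<not> E \<subseteq> {0}" using d dim_eq_0[of E] by linarith
  then obtain x where "x \<in> E" "x \<noteq> 0" by blast
  then have "x /\<^sub>R norm x \<in> sphere 0 1 \<inter> E" using E by (simp add: subspace_scale)
  then show ?thesis unfolding sphere_point_def by (rule someI)
qed

lemma sets_unit_ball_measure [simp, measurable_cong]: "sets unit_ball_measure = sets borel"
  by (simp add: unit_ball_measure_def)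

lemma space_unit_ball_measure [simp]: "space unit_ball_measure = UNIV"
  by (simp add: unit_ball_measure_def)

lemma emeasure_unit_ball_measure_UNIV:
  "emeasure (unit_ball_measure :: 'a::euclidean_space measure) UNIV = 1"
proof -
  have "measure lborel (ball (0::'a) 1) > 0" by (rule content_ball_pos) simp
  then have "emeasure lborel (ball (0::'a) 1) \<noteq> 0"
    using emeasure_lborel_ball_finite[of "0::'a" 1] by (simp add: emeasure_eq_ennreal_measure)
  then show ?thesis
    using emeasure_lborel_ball_finite[of "0::'a" 1] unfolding unit_ball_measure_def
    by (subst emeasure_uniform_measure) (auto simp: divide_eq_1_ennreal)
qed

lemma distr_unit_ball_measure_orthogonal_transformation:
  fixes T :: "'a::euclidean_space \<Rightarrow> 'a"
  assumes T: "orthogonal_transformation T"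
  shows "distr unit_ball_measure borel T = unit_ball_measure"
proof (rule measure_eqI)
  have Tm: "T \<in> borel_measurable borel" by (rule borel_measurable_orthogonal_transformation[OF T])
  fix A assume "A \<in> sets (distr unit_ball_measure borel T)"
  then have A: "A \<in> sets borel" by simp
  have "emeasure (distr unit_ball_measure borel T) A = emeasure unit_ball_measure (T -` A)"
    using A Tm by (simp add: emeasure_distr)
  also have "\<dots> = emeasure lborel (ball 0 1 \<inter> T -` A) / emeasure lborel (ball (0::'a) 1)"
    unfolding unit_ball_measure_def using A Tm
    by (subst emeasure_uniform_measure) (auto simp: measurable_sets_borel)
  also have "ball 0 1 \<inter> T -` A = T -` (ball 0 1 \<inter> A)"
    using T by (auto simp: orthogonal_transformation_norm)
  also have "emeasure lborel (T -` (ball 0 1 \<inter> A)) = emeasure (distr lborel borel T) (ball 0 1 \<inter> A)"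
    using A Tm by (simp add: emeasure_distr)
  also have "\<dots> = emeasure lborel (ball 0 1 \<inter> A)" by (simp add: distr_lborel_orthogonal_transformation[OF T])
  also have "emeasure lborel (ball 0 1 \<inter> A) / emeasure lborel (ball (0::'a) 1) = emeasure unit_ball_measure A"
    unfolding unit_ball_measure_def using A by (subst emeasure_uniform_measure) auto
  finally show "emeasure (distr unit_ball_measure borel T) A = emeasure unit_ball_measure A" .
qed simp

lemma radial_proj_in_sphere:
  fixes E :: "'a::euclidean_space set"
  assumes E: "subspace E" and d: "dim E \<ge> 1"
  shows "radial_proj E x \<in> sphere 0 1 \<inter> E"
  using sphere_point_in[OF assms] proj_scaled_in_sphere[OF E] by (simp add: radial_proj_def)

lemma measurable_radial_proj:
  fixes E :: "'a::euclidean_space set"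
  assumes E: "subspace E" and d: "dim E \<ge> 1"
  shows "radial_proj E \<in> measurable borel (restrict_space borel (sphere 0 1 \<inter> E))"
proof (rule measurable_restrict_space2)
  show "radial_proj E \<in> space borel \<rightarrow> sphere 0 1 \<inter> E" using radial_proj_in_sphere[OF E d] by blast
  have [measurable]: "proj E \<in> borel_measurable borel" by (rule borel_measurable_proj[OF E])
  show "radial_proj E \<in> borel_measurable borel" unfolding radial_proj_def[abs_def] by measurable
qed

lemma orthogonal_comp_null_sets:
  fixes E :: "'a::euclidean_space set"
  assumes E: "subspace E" and d: "dim E \<ge> 1"
  shows "orthogonal_comp E \<in> null_sets lborel"
proof (rule negligible_borel_imp_null_sets)
  show "negligible (orthogonal_comp E)"
    by (rule negligible_lowdim) (use dim_add_dim_orthogonal_comp[OF E] d in simp)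
  show "orthogonal_comp E \<in> sets borel"
    by (rule borel_closed) (simp add: closed_subspace subspace_orthogonal_comp)
qed

lemma AE_radial_proj_orthogonal_transformation:
  fixes E :: "'a::euclidean_space set"
  assumes E: "subspace E" and d: "dim E \<ge> 1"
    and T: "orthogonal_transformation T" and TE: "T ` E = E"
  shows "AE x in unit_ball_measure. T (radial_proj E x) = radial_proj E (T x)"
proof -
  have "AE x in lborel. x \<notin> orthogonal_comp E"
    using orthogonal_comp_null_sets[OF E d] by (rule AE_not_in)
  then have "AE x in unit_ball_measure. x \<notin> orthogonal_comp E"
    unfolding unit_ball_measure_def by (intro AE_uniform_measureI) auto
  then show ?thesis
  proof (rule AE_mp, intro AE_I2 impI)
    fix x assume "x \<notin> orthogonal_comp E"
    then have "proj E x \<noteq> 0" using proj_eq_0_iff[OF E] by blast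
    moreover from this have "T (proj E x) \<noteq> 0"
      using T by (metis norm_eq_zero orthogonal_transformation_norm)
    ultimately show "T (radial_proj E x) = radial_proj E (T x)"
      using T proj_orthogonal_transformation[OF E T TE]
      by (simp add: radial_proj_def orthogonal_transformation_norm orthogonal_transformation_scaleR)
  qed
qed

lemma radial_sphere_measure_invariant:
  fixes E :: "'a::euclidean_space set"
  assumes E: "subspace E" and d: "dim E \<ge> 1"
    and T: "orthogonal_transformation T" and TE: "T ` E = E"
  shows "distr (radial_sphere_measure E) (radial_sphere_measure E) T = radial_sphere_measure E"
proof -
  let ?R = "restrict_space borel (sphere 0 1 \<inter> E)"
  have Tm: "T \<in> measurable ?R ?R" by (rule measurable_orthogonal_transformation_sphere[OF T TE])
  have Tb: "T \<in> borel_measurable borel" by (rule borel_measurable_orthogonal_transformation[OF T])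
  have pm: "radial_proj E \<in> measurable unit_ball_measure ?R"
    using measurable_radial_proj[OF E d] measurable_cong_sets[OF sets_unit_ball_measure refl] by blast
  have comm: "AE x in unit_ball_measure. (T \<circ> radial_proj E) x = (radial_proj E \<circ> T) x"
    using AE_radial_proj_orthogonal_transformation[OF E d T TE] by simp
  have "distr (radial_sphere_measure E) (radial_sphere_measure E) T =
      distr (distr unit_ball_measure ?R (radial_proj E)) ?R T"
    unfolding radial_sphere_measure_def by (rule distr_cong) auto
  also have "\<dots> = distr unit_ball_measure ?R (T \<circ> radial_proj E)"
    by (rule distr_distr[OF Tm pm])
  also have "\<dots> = distr unit_ball_measure ?R (radial_proj E \<circ> T)"
  proof (rule distr_cong_AE[OF refl refl comm])
    show "T \<circ> radial_proj E \<in> measurable unit_ball_measure ?R" using Tm pm by measurable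
    show "radial_proj E \<circ> T \<in> measurable unit_ball_measure ?R"
      using measurable_comp[OF Tb measurable_radial_proj[OF E d]]
        measurable_cong_sets[OF sets_unit_ball_measure refl] by blast
  qed
  also have "\<dots> = distr (distr unit_ball_measure borel T) ?R (radial_proj E)"
    by (rule distr_distr[symmetric, OF measurable_radial_proj[OF E d]])
       (use Tb measurable_cong_sets[OF sets_unit_ball_measure refl] in blast)
  finally show ?thesis
    by (simp add: radial_sphere_measure_def distr_unit_ball_measure_orthogonal_transformation[OF T])
qed

lemma invariant_radial_sphere_measure:
  fixes E :: "'a::euclidean_space set"
  assumes E: "subspace E" and d: "dim E \<ge> 1"
  shows "invariant_sphere_measure E (radial_sphere_measure E)"
proof -
  have space: "space (radial_sphere_measure E) = sphere 0 1 \<inter> E"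
    by (simp add: radial_sphere_measure_def space_restrict_space)
  have "emeasure (radial_sphere_measure E) (space (radial_sphere_measure E)) =
      emeasure unit_ball_measure (radial_proj E -` (sphere 0 1 \<inter> E) \<inter> space unit_ball_measure)"
    unfolding radial_sphere_measure_def
    using measurable_radial_proj[OF E d] measurable_cong_sets[OF sets_unit_ball_measure refl]
      sets.top[of "restrict_space borel (sphere 0 1 \<inter> E)"]
    by (subst emeasure_distr) (auto simp: space_restrict_space)
  also have "radial_proj E -` (sphere 0 1 \<inter> E) \<inter> space unit_ball_measure = UNIV"
    using radial_proj_in_sphere[OF E d] by auto
  finally show ?thesis
    using emeasure_unit_ball_measure_UNIV
    using radial_sphere_measure_invariant[OF E d]
    by (simp add: invariant_sphere_measure_def radial_sphere_measure_def)
qed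

lemma compact_sphere_Int_subspace:
  fixes E :: "'a::euclidean_space set"
  assumes "subspace E" shows "compact (sphere 0 1 \<inter> E)"
  using assms by (intro compact_Int_closed) (auto simp: closed_subspace)

lemma closed_sphere_Int_subspace:
  fixes E :: "'a::euclidean_space set"
  assumes "subspace E" shows "closed (sphere 0 1 \<inter> E)"
  using assms by (intro closed_Int) (auto simp: closed_subspace)

lemma bounded_continuous_on_compact:
  fixes f :: "'a::metric_space \<Rightarrow> real"
  assumes "compact S" "continuous_on S f"
  obtains B where "\<And>z. z \<in> S \<Longrightarrow> \<bar>f z\<bar> \<le> B"
proof -
  have "bounded (f ` S)" by (rule compact_imp_bounded[OF compact_continuous_image[OF assms(2,1)]])
  then show ?thesis using that by (auto simp: bounded_real)
qed

context
  fixes E :: "'a::euclidean_space set" and \<tau> :: "'a measure"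
  assumes \<tau>: "invariant_sphere_measure E \<tau>"
begin

lemma sets_invariant_sphere_measure: "sets \<tau> = sets (restrict_space borel (sphere 0 1 \<inter> E))"
  using \<tau> by (simp add: invariant_sphere_measure_def)

lemma space_invariant_sphere_measure: "space \<tau> = sphere 0 1 \<inter> E"
  using sets_eq_imp_space_eq[OF sets_invariant_sphere_measure] by (simp add: space_restrict_space)

lemma prob_space_invariant_sphere_measure: "prob_space \<tau>"
  using \<tau> by (intro prob_spaceI) (simp add: invariant_sphere_measure_def)

lemma distr_invariant_sphere_measure:
  "orthogonal_transformation T \<Longrightarrow> T ` E = E \<Longrightarrow> distr \<tau> \<tau> T = \<tau>"
  using \<tau> by (simp add: invariant_sphere_measure_def)

lemma measurable_orthogonal_transformation_invariant_sphere_measure: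
  "orthogonal_transformation T \<Longrightarrow> T ` E = E \<Longrightarrow> T \<in> measurable \<tau> \<tau>"
  using measurable_orthogonal_transformation_sphere[of T E E]
    measurable_cong_sets[OF sets_invariant_sphere_measure sets_invariant_sphere_measure]
  by blast

lemma borel_measurable_invariant_sphere_measure:
  "f \<in> borel_measurable borel \<Longrightarrow> f \<in> borel_measurable \<tau>"
  using measurable_restrict_space1 measurable_cong_sets[OF sets_invariant_sphere_measure refl] by blast

lemma continuous_on_borel_measurable_invariant_sphere_measure:
  "continuous_on (sphere 0 1 \<inter> E) f \<Longrightarrow> f \<in> borel_measurable \<tau>"
  using borel_measurable_continuous_on_restrict measurable_cong_sets[OF sets_invariant_sphere_measure refl]
  by blast

lemma integrable_invariant_sphere_measure:
  assumes E: "subspace E" and f: "continuous_on (sphere 0 1 \<inter> E) (f :: 'a \<Rightarrow> real)"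
  shows "integrable \<tau> f"
proof -
  interpret prob_space \<tau> by (rule prob_space_invariant_sphere_measure)
  obtain B where "\<And>z. z \<in> sphere 0 1 \<inter> E \<Longrightarrow> \<bar>f z\<bar> \<le> B"
    using bounded_continuous_on_compact[OF compact_sphere_Int_subspace[OF E] f] by blast
  then show ?thesis
    using continuous_on_borel_measurable_invariant_sphere_measure[OF f] space_invariant_sphere_measure
    by (intro integrable_const_bound[where B=B]) auto
qed

lemma abs_integral_invariant_sphere_measure_le:
  assumes E: "subspace E" and f: "continuous_on (sphere 0 1 \<inter> E) f"
    and B: "\<And>z. z \<in> sphere 0 1 \<inter> E \<Longrightarrow> \<bar>f z\<bar> \<le> (B::real)"
  shows "\<bar>integral\<^sup>L \<tau> f\<bar> \<le> B"
proof -
  interpret prob_space \<tau> by (rule prob_space_invariant_sphere_measure)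
  have "\<bar>integral\<^sup>L \<tau> f\<bar> \<le> integral\<^sup>L \<tau> (\<lambda>x. \<bar>f x\<bar>)" by (rule integral_abs_bound)
  also have "\<dots> \<le> integral\<^sup>L \<tau> (\<lambda>x. B)"
    using integrable_invariant_sphere_measure[OF E f] B space_invariant_sphere_measure
    by (intro integral_mono) auto
  finally show ?thesis using prob_space by simp
qed

end

definition reflection :: "'a::euclidean_space \<Rightarrow> 'a \<Rightarrow> 'a" where
  "reflection w x = x - (2 * (x \<bullet> w) / (w \<bullet> w)) *\<^sub>R w"

lemma orthogonal_transformation_reflection: "orthogonal_transformation (reflection w)"
proof -
  have "linear (reflection w)"
    unfolding reflection_def[abs_def]
    by (intro linearI) (auto simp: inner_add_left scaleR_add_left algebra_simps add_divide_distrib)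
  moreover have "reflection w x \<bullet> reflection w y = x \<bullet> y" for x y
  proof (cases "w = 0")
    case False
    then have "w \<bullet> w \<noteq> 0" by simp
    then show ?thesis unfolding reflection_def
      by (simp add: inner_diff_left inner_diff_right algebra_simps power2_eq_square field_simps inner_commute)
  qed (simp add: reflection_def)
  ultimately show ?thesis by (simp add: orthogonal_transformation_def)
qed

lemma reflection_reflection: "reflection w (reflection w x) = x"
proof (cases "w = 0")
  case False
  then have "w \<bullet> w \<noteq> 0" by simp
  then show ?thesis unfolding reflection_def by (simp add: inner_diff_left algebra_simps field_simps)
qed (simp add: reflection_def)

lemma inner_reflection_left: "reflection w x \<bullet> y = x \<bullet> reflection w y"
  unfolding reflection_def by (simp add: inner_diff_left inner_diff_right algebra_simps inner_commute)

lemma reflection_image_subspace: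
  assumes E: "subspace E" and w: "w \<in> E"
  shows "reflection w ` E = E"
proof -
  have sub: "reflection w x \<in> E" if "x \<in> E" for x
    unfolding reflection_def using E w that by (simp add: subspace_diff subspace_scale)
  moreover have "x \<in> reflection w ` E" if "x \<in> E" for x
    using sub[OF that] reflection_reflection[of w x] by (metis image_eqI)
  ultimately show ?thesis by blast
qed

lemma reflection_swaps_unit_vectors:
  fixes e e' :: "'a::euclidean_space"
  assumes "norm e = 1" "norm e' = 1" "e \<noteq> e'"
  shows "reflection (e - e') e' = e"
proof -
  let ?w = "e - e'"
  have ee: "e \<bullet> e = 1" "e' \<bullet> e' = 1" using assms by (simp_all add: norm_eq_1)
  have ww: "?w \<bullet> ?w = 2 - 2 * (e \<bullet> e')"
    using ee by (simp add: inner_diff_left inner_diff_right inner_commute)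
  have ew: "e' \<bullet> ?w = e \<bullet> e' - 1" using ee by (simp add: inner_diff_right inner_commute)
  have "?w \<bullet> ?w \<noteq> 0" using assms by simp
  then have "2 - 2 * (e \<bullet> e') \<noteq> 0" using ww by simp
  then have "2 * (e' \<bullet> ?w) / (?w \<bullet> ?w) = -1" unfolding ew ww by (simp add: field_simps)
  then show ?thesis unfolding reflection_def by simp
qed

(* The reflection in the hyperplane orthogonal to e - e' preserves E and swaps e and e'. *)
lemma integral_invariant_sphere_measure_inner_eq:
  fixes E :: "'a::euclidean_space set"
  assumes \<tau>: "invariant_sphere_measure E \<tau>" and E: "subspace E"
    and e: "e \<in> sphere 0 1 \<inter> E" and e': "e' \<in> sphere 0 1 \<inter> E"
    and g: "(g :: real \<Rightarrow> real) \<in> borel_measurable borel"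
  shows "(\<integral>z. g (z \<bullet> e') \<partial>\<tau>) = (\<integral>z. g (z \<bullet> e) \<partial>\<tau>)"
proof (cases "e = e'")
  case False
  define R where "R = reflection (e - e')"
  have R: "orthogonal_transformation R" "R ` E = E"
    unfolding R_def using e e' E
    by (simp_all add: orthogonal_transformation_reflection reflection_image_subspace subspace_diff)
  have gm: "(\<lambda>z. g (z \<bullet> e')) \<in> borel_measurable \<tau>"
    by (rule borel_measurable_invariant_sphere_measure[OF \<tau>]) (use g in measurable)
  have "(\<integral>z. g (z \<bullet> e') \<partial>\<tau>) = (\<integral>z. g (z \<bullet> e') \<partial>(distr \<tau> \<tau> R))"
    using distr_invariant_sphere_measure[OF \<tau> R] by simp
  also have "\<dots> = (\<integral>z. g (R z \<bullet> e') \<partial>\<tau>)"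
    using measurable_orthogonal_transformation_invariant_sphere_measure[OF \<tau> R] gm
    by (rule integral_distr)
  also have "\<dots> = (\<integral>z. g (z \<bullet> e) \<partial>\<tau>)"
  proof -
    have "R z \<bullet> e' = z \<bullet> e" for z
      unfolding R_def using inner_reflection_left[of "e - e'" z e'] reflection_swaps_unit_vectors[of e e'] e e' False
      by simp
    then show ?thesis by simp
  qed
  finally show ?thesis .
qed simp

section \<open>Exponential sums\<close>

definition exp_sum :: "(real \<times> 'a::euclidean_space) list \<Rightarrow> 'a \<Rightarrow> real" where
  "exp_sum L z = (\<Sum>(c, a)\<leftarrow>L. c * exp (z \<bullet> a))"

lemma exp_sum_Nil [simp]: "exp_sum [] z = 0"
  by (simp add: exp_sum_def)

lemma exp_sum_Cons [simp]: "exp_sum ((c, a) # L) z = c * exp (z \<bullet> a) + exp_sum L z"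
  by (simp add: exp_sum_def)

lemma exp_sum_append: "exp_sum (L1 @ L2) z = exp_sum L1 z + exp_sum L2 z"
  by (simp add: exp_sum_def)

lemma exp_sum_mult:
  "exp_sum (concat (map (\<lambda>(c, a). map (\<lambda>(d, b). (c * d, a + b)) L2) L1)) z = exp_sum L1 z * exp_sum L2 z"
proof (induction L1)
  case (Cons p L1)
  have "exp_sum (map (\<lambda>(d, b). (c * d, a + b)) L2) z = c * exp (z \<bullet> a) * exp_sum L2 z" for c a
    by (induction L2) (auto simp: inner_add_right exp_add algebra_simps)
  then show ?case using Cons by (cases p) (simp add: exp_sum_append algebra_simps)
qed simp

lemma continuous_on_exp_sum: "continuous_on S (exp_sum L)"
proof (induction L)
  case (Cons p L)
  then show ?case by (cases p) (simp add: continuous_intros)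
qed (simp add: exp_sum_def[abs_def])

lemma exp_sum_dense:
  fixes S :: "'a::euclidean_space set"
  assumes S: "compact S" and f: "continuous_on S f" and e: "e > 0"
  obtains L where "\<And>x. x \<in> S \<Longrightarrow> \<bar>f x - exp_sum L x\<bar> < e"
proof -
  let ?P = "\<lambda>g. \<exists>L. g = exp_sum L"
  have "\<exists>g. ?P g \<and> (\<forall>x\<in>S. \<bar>f x - g x\<bar> < e)"
  proof (rule Stone_Weierstrass_HOL[where P="?P"])
    show "?P (\<lambda>x. c)" for c
      by (rule exI[of _ "[(c, 0)]"]) (simp add: fun_eq_iff)
    show "continuous_on S g" if "?P g" for g using that continuous_on_exp_sum by blast
    show "?P (\<lambda>x. g x + h x)" if "?P g \<and> ?P h" for g h
    proof -
      from that obtain L1 L2 where "g = exp_sum L1" "h = exp_sum L2" by blast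
      then show ?thesis by (intro exI[of _ "L1 @ L2"]) (simp add: fun_eq_iff exp_sum_append)
    qed
    show "?P (\<lambda>x. g x * h x)" if "?P g \<and> ?P h" for g h
    proof -
      from that obtain L1 L2 where "g = exp_sum L1" "h = exp_sum L2" by blast
      then show ?thesis
        by (intro exI[of _ "concat (map (\<lambda>(c, a). map (\<lambda>(d, b). (c * d, a + b)) L2) L1)"])
           (simp add: fun_eq_iff exp_sum_mult)
    qed
    show "\<exists>g. ?P g \<and> g x \<noteq> g y" if "x \<in> S \<and> y \<in> S \<and> x \<noteq> y" for x y
    proof (intro exI conjI)
      have "(x - y) \<bullet> (x - y) > 0" using that by simp
      then show "exp_sum [(1, x - y)] x \<noteq> exp_sum [(1, x - y)] y" by (simp add: inner_diff_left)
    qed blast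
  qed (use S f e in auto)
  then show ?thesis using that by blast
qed

lemma functionals_eq_if_eq_on_exp_sums:
  fixes \<Lambda>1 \<Lambda>2 :: "('a::euclidean_space \<Rightarrow> real) \<Rightarrow> real"
  assumes S: "compact S" and f: "continuous_on S f"
    and exp: "\<And>L. \<Lambda>1 (exp_sum L) = \<Lambda>2 (exp_sum L)"
    and lip1: "\<And>g e. continuous_on S g \<Longrightarrow> 0 \<le> e \<Longrightarrow> (\<And>x. x \<in> S \<Longrightarrow> \<bar>f x - g x\<bar> \<le> e) \<Longrightarrow>
                 \<bar>\<Lambda>1 f - \<Lambda>1 g\<bar> \<le> C * e"
    and lip2: "\<And>g e. continuous_on S g \<Longrightarrow> 0 \<le> e \<Longrightarrow> (\<And>x. x \<in> S \<Longrightarrow> \<bar>f x - g x\<bar> \<le> e) \<Longrightarrow>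
                 \<bar>\<Lambda>2 f - \<Lambda>2 g\<bar> \<le> C * e"
  shows "\<Lambda>1 f = \<Lambda>2 f"
proof -
  have "\<bar>\<Lambda>1 f - \<Lambda>2 f\<bar> \<le> 0 + \<epsilon>" if "\<epsilon> > 0" for \<epsilon>
  proof -
    define e where "e = \<epsilon> / (2 * \<bar>C\<bar> + 1)"
    have e: "e > 0" using that by (simp add: e_def add_nonneg_pos)
    obtain L where L: "\<And>x. x \<in> S \<Longrightarrow> \<bar>f x - exp_sum L x\<bar> < e"
      using exp_sum_dense[OF S f e] by blast
    have "\<bar>\<Lambda>1 f - \<Lambda>2 f\<bar> \<le> \<bar>\<Lambda>1 f - \<Lambda>1 (exp_sum L)\<bar> + \<bar>\<Lambda>2 f - \<Lambda>2 (exp_sum L)\<bar>"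
      using exp[of L] by linarith
    also have "\<dots> \<le> C * e + C * e"
      by (intro add_mono lip1 lip2 continuous_on_exp_sum) (meson L e less_imp_le)+
    also have "\<dots> \<le> \<bar>C\<bar> * e + \<bar>C\<bar> * e"
      using mult_right_mono[OF abs_ge_self[of C], of e] e by linarith
    also have "\<dots> \<le> (2 * \<bar>C\<bar> + 1) * e" using e by (simp add: algebra_simps)
    also have "\<dots> = \<epsilon>" using that by (simp add: e_def add_nonneg_pos)
    finally show ?thesis by simp
  qed
  then show ?thesis using field_le_epsilon[of "\<bar>\<Lambda>1 f - \<Lambda>2 f\<bar>" 0] by simp
qed

section \<open>Uniqueness of the invariant measure\<close>

lemma Fubini_invariant_sphere_measures_exp_inner:
  fixes E1 E2 :: "'a::euclidean_space set"
  assumes t1: "invariant_sphere_measure E1 \<tau>1" and t2: "invariant_sphere_measure E2 \<tau>2"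
  shows "(\<integral>w. (\<integral>z. exp (r * (z \<bullet> w)) \<partial>\<tau>1) \<partial>\<tau>2) = (\<integral>z. (\<integral>w. exp (r * (z \<bullet> w)) \<partial>\<tau>2) \<partial>\<tau>1)"
proof -
  interpret p1: prob_space \<tau>1 by (rule prob_space_invariant_sphere_measure[OF t1])
  interpret p2: prob_space \<tau>2 by (rule prob_space_invariant_sphere_measure[OF t2])
  interpret pair_sigma_finite \<tau>1 \<tau>2 by unfold_locales
  interpret fp: finite_measure "\<tau>1 \<Otimes>\<^sub>M \<tau>2"
    by (rule finite_measure_pair_measure) unfold_locales
  have [measurable]: "(\<lambda>x. x) \<in> borel_measurable \<tau>1" "(\<lambda>x. x) \<in> borel_measurable \<tau>2"
    by (simp_all add: borel_measurable_invariant_sphere_measure[OF t1]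
                      borel_measurable_invariant_sphere_measure[OF t2])
  have "integrable (\<tau>1 \<Otimes>\<^sub>M \<tau>2) (\<lambda>(z, w). exp (r * (z \<bullet> w)))"
  proof (rule fp.integrable_const_bound[where B="exp \<bar>r\<bar>"])
    have "(\<lambda>p. exp (r * (fst p \<bullet> snd p))) \<in> borel_measurable (\<tau>1 \<Otimes>\<^sub>M \<tau>2)" by measurable
    then show "(\<lambda>(z, w). exp (r * (z \<bullet> w))) \<in> borel_measurable (\<tau>1 \<Otimes>\<^sub>M \<tau>2)"
      by (simp add: case_prod_beta')
    show "AE x in \<tau>1 \<Otimes>\<^sub>M \<tau>2. norm ((\<lambda>(z, w). exp (r * (z \<bullet> w))) x) \<le> exp \<bar>r\<bar>"
    proof (rule AE_I2)
      fix x assume "x \<in> space (\<tau>1 \<Otimes>\<^sub>M \<tau>2)"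
      then obtain z w where x: "x = (z, w)" "norm z = 1" "norm w = 1"
        using space_invariant_sphere_measure[OF t1] space_invariant_sphere_measure[OF t2]
        by (auto simp: space_pair_measure)
      have "\<bar>z \<bullet> w\<bar> \<le> 1" using Cauchy_Schwarz_ineq2[of z w] x by simp
      then have "r * (z \<bullet> w) \<le> \<bar>r\<bar>"
        by (metis abs_ge_self abs_mult mult.commute mult_left_le order_trans abs_ge_zero)
      then show "norm ((\<lambda>(z, w). exp (r * (z \<bullet> w))) x) \<le> exp \<bar>r\<bar>" using x by simp
    qed
  qed
  then show ?thesis by (rule Fubini_integral)
qed

(* By transitivity, the inner integrals in Fubini's theorem do not depend on the outer variable. *)
lemma invariant_sphere_measures_integral_exp_inner_eq:
  fixes E :: "'a::euclidean_space set"
  assumes t1: "invariant_sphere_measure E \<tau>1" and t2: "invariant_sphere_measure E \<tau>2"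
    and E: "subspace E" and e: "e \<in> sphere 0 1 \<inter> E"
  shows "(\<integral>z. exp (r * (z \<bullet> e)) \<partial>\<tau>1) = (\<integral>z. exp (r * (z \<bullet> e)) \<partial>\<tau>2)"
proof -
  interpret p1: prob_space \<tau>1 by (rule prob_space_invariant_sphere_measure[OF t1])
  interpret p2: prob_space \<tau>2 by (rule prob_space_invariant_sphere_measure[OF t2])
  have inner: "(\<integral>z. exp (r * (z \<bullet> w)) \<partial>\<tau>) = (\<integral>z. exp (r * (z \<bullet> e)) \<partial>\<tau>)"
    if "invariant_sphere_measure E \<tau>" "w \<in> sphere 0 1 \<inter> E" for \<tau> w
    by (rule integral_invariant_sphere_measure_inner_eq[OF that(1) E e that(2), of "\<lambda>t. exp (r * t)"])
       measurable
  have "(\<integral>w. (\<integral>z. exp (r * (z \<bullet> w)) \<partial>\<tau>1) \<partial>\<tau>2) = (\<integral>z. exp (r * (z \<bullet> e)) \<partial>\<tau>1)"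
    using inner[OF t1] space_invariant_sphere_measure[OF t2] p2.prob_space
    by (subst Bochner_Integration.integral_cong[OF refl, where g="\<lambda>_. \<integral>z. exp (r * (z \<bullet> e)) \<partial>\<tau>1"]) auto
  moreover have "(\<integral>w. exp (r * (z \<bullet> w)) \<partial>\<tau>2) = (\<integral>w. exp (r * (w \<bullet> e)) \<partial>\<tau>2)"
    if "z \<in> space \<tau>1" for z
    using inner[OF t2, of z] that space_invariant_sphere_measure[OF t1] by (simp add: inner_commute)
  then have "(\<integral>z. (\<integral>w. exp (r * (z \<bullet> w)) \<partial>\<tau>2) \<partial>\<tau>1) = (\<integral>w. exp (r * (w \<bullet> e)) \<partial>\<tau>2)"
    using p1.prob_space
    by (subst Bochner_Integration.integral_cong[OF refl, where g="\<lambda>_. \<integral>w. exp (r * (w \<bullet> e)) \<partial>\<tau>2"]) auto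
  ultimately show ?thesis using Fubini_invariant_sphere_measures_exp_inner[OF t1 t2] by simp
qed

lemma invariant_sphere_measures_integral_exp_eq:
  fixes E :: "'a::euclidean_space set"
  assumes t1: "invariant_sphere_measure E \<tau>1" and t2: "invariant_sphere_measure E \<tau>2"
    and E: "subspace E"
  shows "(\<integral>z. exp (z \<bullet> a) \<partial>\<tau>1) = (\<integral>z. exp (z \<bullet> a) \<partial>\<tau>2)"
proof -
  define p where "p = proj E a"
  define e where "e = (if p = 0 then sphere_point E else p /\<^sub>R norm p)"
  obtain z where "z \<in> sphere 0 1 \<inter> E"
    using space_invariant_sphere_measure[OF t1] prob_space.not_empty[OF prob_space_invariant_sphere_measure[OF t1]]
    by blast
  then have "\<not> E \<subseteq> {0}" by auto
  then have "dim E \<ge> 1" using dim_eq_0[of E] by linarith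
  then have e: "e \<in> sphere 0 1 \<inter> E"
    using sphere_point_in[OF E] proj_scaled_in_sphere[OF E] by (simp add: e_def p_def)
  have "z \<bullet> a = norm p * (z \<bullet> e)" if "z \<in> E" for z
    using inner_proj[OF E that, of a] by (auto simp: e_def p_def)
  then have "(\<integral>z. exp (z \<bullet> a) \<partial>\<tau>) = (\<integral>z. exp (norm p * (z \<bullet> e)) \<partial>\<tau>)"
    if "invariant_sphere_measure E \<tau>" for \<tau>
    using space_invariant_sphere_measure[OF that] by (intro Bochner_Integration.integral_cong) auto
  then show ?thesis
    using invariant_sphere_measures_integral_exp_inner_eq[OF t1 t2 E e] t1 t2 by simp
qed

lemma invariant_sphere_measures_integral_exp_sum_eq:
  fixes E :: "'a::euclidean_space set"
  assumes t1: "invariant_sphere_measure E \<tau>1" and t2: "invariant_sphere_measure E \<tau>2"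
    and E: "subspace E"
  shows "(\<integral>z. exp_sum L z \<partial>\<tau>1) = (\<integral>z. exp_sum L z \<partial>\<tau>2)"
proof (induction L)
  case (Cons p L)
  obtain c a where p: "p = (c, a)" by (cases p)
  have "(\<integral>z. exp_sum (p # L) z \<partial>\<tau>) = c * (\<integral>z. exp (z \<bullet> a) \<partial>\<tau>) + (\<integral>z. exp_sum L z \<partial>\<tau>)"
    if t: "invariant_sphere_measure E \<tau>" for \<tau>
    using integrable_invariant_sphere_measure[OF t E]
    by (simp add: p continuous_intros continuous_on_exp_sum)
  then show ?case
    using Cons invariant_sphere_measures_integral_exp_eq[OF t1 t2 E, of a] t1 t2 by simp
qed simp

lemma invariant_sphere_measures_integral_eq:
  fixes E :: "'a::euclidean_space set"
  assumes t1: "invariant_sphere_measure E \<tau>1" and t2: "invariant_sphere_measure E \<tau>2"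
    and E: "subspace E" and f: "continuous_on (sphere 0 1 \<inter> E) (f :: 'a \<Rightarrow> real)"
  shows "(\<integral>z. f z \<partial>\<tau>1) = (\<integral>z. f z \<partial>\<tau>2)"
proof (rule functionals_eq_if_eq_on_exp_sums[OF compact_sphere_Int_subspace[OF E] f, where C=1])
  show "(\<integral>z. exp_sum L z \<partial>\<tau>1) = (\<integral>z. exp_sum L z \<partial>\<tau>2)" for L
    by (rule invariant_sphere_measures_integral_exp_sum_eq[OF t1 t2 E])
  have "\<bar>(\<integral>z. f z \<partial>\<tau>) - (\<integral>z. g z \<partial>\<tau>)\<bar> \<le> 1 * e"
    if t: "invariant_sphere_measure E \<tau>" and g: "continuous_on (sphere 0 1 \<inter> E) g"
      and fg: "\<And>x. x \<in> sphere 0 1 \<inter> E \<Longrightarrow> \<bar>f x - g x\<bar> \<le> e" for \<tau> g e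
  proof -
    have "(\<integral>z. f z \<partial>\<tau>) - (\<integral>z. g z \<partial>\<tau>) = (\<integral>z. f z - g z \<partial>\<tau>)"
      using integrable_invariant_sphere_measure[OF t E] f g by simp
    also have "\<bar>\<dots>\<bar> \<le> e"
      by (rule abs_integral_invariant_sphere_measure_le[OF t E]) (use f g fg in \<open>auto intro: continuous_intros\<close>)
    finally show ?thesis by simp
  qed
  then show "\<bar>(\<integral>z. f z \<partial>\<tau>1) - (\<integral>z. g z \<partial>\<tau>1)\<bar> \<le> 1 * e" "\<bar>(\<integral>z. f z \<partial>\<tau>2) - (\<integral>z. g z \<partial>\<tau>2)\<bar> \<le> 1 * e"
    if "continuous_on (sphere 0 1 \<inter> E) g" "0 \<le> e" "\<And>x. x \<in> sphere 0 1 \<inter> E \<Longrightarrow> \<bar>f x - g x\<bar> \<le> e"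
    for g e
    using t1 t2 that by blast+
qed

lemma sets_restrict_space_borel_closed:
  fixes X :: "'a::topological_space set"
  assumes X: "closed X"
  shows "sets (restrict_space borel X) = sigma_sets X {C. closed C \<and> C \<subseteq> X}"
proof -
  have borel: "sets (borel :: 'a measure) = sigma_sets UNIV (Collect closed)"
    by (subst borel_eq_closed) (rule sets_measure_of, simp)
  have "sets (restrict_space borel X) = (\<inter>) X ` sigma_sets UNIV (Collect closed)"
    by (simp add: sets_restrict_space borel)
  also have "\<dots> = sigma_sets X ((\<inter>) X ` Collect closed)"
    using X by (intro sigma_sets_Int) auto
  also have "(\<inter>) X ` Collect closed = {C. closed C \<and> C \<subseteq> X}"
  proof (intro equalityI subsetI)
    fix C assume "C \<in> {C. closed C \<and> C \<subseteq> X}"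
    then show "C \<in> (\<inter>) X ` Collect closed" by (intro image_eqI[of _ _ C]) auto
  qed (use X in auto)
  finally show ?thesis .
qed

lemma tendsto_infdist_cutoff_indicator:
  fixes C :: "'a::metric_space set"
  assumes C: "closed C" "C \<noteq> {}"
  shows "(\<lambda>j. max 0 (1 - real j * infdist z C)) \<longlonglongrightarrow> indicator C z"
proof (cases "z \<in> C")
  case False
  have d: "infdist z C > 0" by (rule infdist_pos_not_in_closed[OF C False])
  obtain N :: nat where N: "1 / infdist z C < real N" using reals_Archimedean2 by blast
  have "max 0 (1 - real j * infdist z C) = 0" if "N \<le> j" for j
  proof -
    have "1 / infdist z C < real j" using N that by linarith
    then show ?thesis using d by (simp add: field_simps)
  qed
  then have "(\<lambda>j. max 0 (1 - real j * infdist z C)) \<longlonglongrightarrow> 0"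
    by (intro tendsto_eventually eventually_sequentiallyI)
  then show ?thesis using False by simp
qed simp

lemma invariant_sphere_measures_closed_eq:
  fixes E :: "'a::euclidean_space set"
  assumes t1: "invariant_sphere_measure E \<tau>1" and t2: "invariant_sphere_measure E \<tau>2"
    and E: "subspace E" and C: "closed C" "C \<subseteq> sphere 0 1 \<inter> E"
  shows "measure \<tau>1 C = measure \<tau>2 C"
proof (cases "C = {}")
  case False
  define f where "f j z = max 0 (1 - real j * infdist z C)" for j :: nat and z :: 'a
  have cf: "continuous_on (sphere 0 1 \<inter> E) (f j)" for j
    unfolding f_def[abs_def] by (intro continuous_intros)
  have lim: "(\<lambda>j. f j z) \<longlonglongrightarrow> indicator C z" for z
    unfolding f_def by (rule tendsto_infdist_cutoff_indicator[OF C(1) False])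
  have conv: "(\<lambda>j. \<integral>z. f j z \<partial>\<tau>) \<longlonglongrightarrow> measure \<tau> C" if t: "invariant_sphere_measure E \<tau>" for \<tau>
  proof -
    interpret prob_space \<tau> by (rule prob_space_invariant_sphere_measure[OF t])
    have Cs: "C \<in> sets \<tau>"
      using sets_invariant_sphere_measure[OF t] C sets_restrict_space_iff[of "sphere 0 1 \<inter> E" borel C]
        closed_sphere_Int_subspace[OF E] by auto
    have "(\<lambda>j. \<integral>z. f j z \<partial>\<tau>) \<longlonglongrightarrow> (\<integral>z. indicator C z \<partial>\<tau>)"
    proof (rule integral_dominated_convergence[where w="\<lambda>_. 1"])
      show "f j \<in> borel_measurable \<tau>" for j
        by (rule continuous_on_borel_measurable_invariant_sphere_measure[OF t cf])
      show "AE x in \<tau>. norm (f j x) \<le> 1" for j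
        by (intro AE_I2) (simp add: f_def infdist_nonneg)
    qed (use Cs lim in simp_all)
    then show ?thesis using Cs by simp
  qed
  have "(\<integral>z. f j z \<partial>\<tau>1) = (\<integral>z. f j z \<partial>\<tau>2)" for j
    by (rule invariant_sphere_measures_integral_eq[OF t1 t2 E cf])
  then show ?thesis using LIMSEQ_unique[OF conv[OF t1]] conv[OF t2] by simp
qed simp

lemma invariant_sphere_measure_unique:
  fixes E :: "'a::euclidean_space set"
  assumes t1: "invariant_sphere_measure E \<tau>1" and t2: "invariant_sphere_measure E \<tau>2"
    and E: "subspace E"
  shows "\<tau>1 = \<tau>2"
proof -
  let ?S = "sphere 0 1 \<inter> E"
  let ?G = "{C. closed C \<and> C \<subseteq> ?S}"
  have sg: "sets \<tau> = sigma_sets ?S ?G" if t: "invariant_sphere_measure E \<tau>" for \<tau>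
    using sets_invariant_sphere_measure[OF t] sets_restrict_space_borel_closed[OF closed_sphere_Int_subspace[OF E]]
    by simp
  interpret p1: prob_space \<tau>1 by (rule prob_space_invariant_sphere_measure[OF t1])
  interpret p2: prob_space \<tau>2 by (rule prob_space_invariant_sphere_measure[OF t2])
  show ?thesis
  proof (rule measure_eqI_generator_eq[where E="?G" and \<Omega>="?S" and A="\<lambda>_. ?S"])
    show "emeasure \<tau>1 X = emeasure \<tau>2 X" if "X \<in> ?G" for X
      using invariant_sphere_measures_closed_eq[OF t1 t2 E] that
      by (simp add: p1.emeasure_eq_measure p2.emeasure_eq_measure)
    show "Int_stable ?G" by (auto simp: Int_stable_def)
    show "?G \<subseteq> Pow ?S" by auto
    show "sets \<tau>1 = sigma_sets ?S ?G" by (rule sg[OF t1])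
    show "sets \<tau>2 = sigma_sets ?S ?G" by (rule sg[OF t2])
    show "range (\<lambda>_. ?S) \<subseteq> ?G" using closed_sphere_Int_subspace[OF E] by auto
  qed simp_all
qed

section \<open>The Haar measure on the sphere of a subspace\<close>

lemma invariant_haar_sphere:
  fixes E :: "'a::euclidean_space set"
  assumes E: "subspace E" and d: "dim E \<ge> 1"
  shows "invariant_sphere_measure E (haar_sphere E)"
proof -
  have "haar_sphere E = radial_sphere_measure E"
    unfolding haar_sphere_eq_The using invariant_radial_sphere_measure[OF E d]
    by (rule the_equality) (rule invariant_sphere_measure_unique[OF _ invariant_radial_sphere_measure[OF E d] E])
  then show ?thesis using invariant_radial_sphere_measure[OF E d] by simp
qed

definition sphere_moment :: "'a::euclidean_space set \<Rightarrow> nat \<Rightarrow> real" where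
  "sphere_moment E j = (\<integral>z. (z \<bullet> sphere_point E) ^ j \<partial>haar_sphere E)"

lemma integral_haar_sphere_inner_power:
  fixes E :: "'a::euclidean_space set"
  assumes E: "subspace E" and d: "dim E \<ge> 1" and e: "e \<in> sphere 0 1 \<inter> E"
  shows "(\<integral>z. (z \<bullet> e) ^ j \<partial>haar_sphere E) = sphere_moment E j"
  unfolding sphere_moment_def
  by (rule integral_invariant_sphere_measure_inner_eq[OF invariant_haar_sphere[OF E d] E sphere_point_in[OF E d] e])
     measurable

lemma integral_haar_sphere_inner_power_proj:
  fixes E :: "'a::euclidean_space set"
  assumes E: "subspace E" and d: "dim E \<ge> 1"
  shows "(\<integral>z. (z \<bullet> a) ^ j \<partial>haar_sphere E) = sphere_moment E j * norm (proj E a) ^ j"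
proof -
  define p where "p = proj E a"
  define e where "e = (if p = 0 then sphere_point E else p /\<^sub>R norm p)"
  have e: "e \<in> sphere 0 1 \<inter> E"
    using sphere_point_in[OF E d] proj_scaled_in_sphere[OF E] by (simp add: e_def p_def)
  have "z \<bullet> a = norm p * (z \<bullet> e)" if "z \<in> E" for z
    using inner_proj[OF E that, of a] by (auto simp: e_def p_def)
  then have "(\<integral>z. (z \<bullet> a) ^ j \<partial>haar_sphere E) = (\<integral>z. norm p ^ j * (z \<bullet> e) ^ j \<partial>haar_sphere E)"
    using space_invariant_sphere_measure[OF invariant_haar_sphere[OF E d]]
    by (intro Bochner_Integration.integral_cong) (auto simp: power_mult_distrib)
  then show ?thesis using integral_haar_sphere_inner_power[OF E d e] by (simp add: p_def)
qed

lemma sphere_moment_odd: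
  fixes E :: "'a::euclidean_space set"
  assumes E: "subspace E" and d: "dim E \<ge> 1" and j: "odd j"
  shows "sphere_moment E j = 0"
proof -
  let ?\<sigma> = "haar_sphere E"
  have t: "invariant_sphere_measure E ?\<sigma>" by (rule invariant_haar_sphere[OF E d])
  have N: "orthogonal_transformation uminus" "uminus ` E = E"
    using orthogonal_transformation_neg[of "\<lambda>x. x"] E
    by (auto simp: o_def image_iff subspace_neg intro!: bexI[where x="- _"])
  have gm: "(\<lambda>z. (z \<bullet> sphere_point E) ^ j) \<in> borel_measurable ?\<sigma>"
    by (rule borel_measurable_invariant_sphere_measure[OF t]) measurable
  have "sphere_moment E j = (\<integral>z. (z \<bullet> sphere_point E) ^ j \<partial>(distr ?\<sigma> ?\<sigma> uminus))"
    using distr_invariant_sphere_measure[OF t N] by (simp add: sphere_moment_def)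
  also have "\<dots> = (\<integral>z. ((- z) \<bullet> sphere_point E) ^ j \<partial>?\<sigma>)"
    using measurable_orthogonal_transformation_invariant_sphere_measure[OF t N] gm by (rule integral_distr)
  also have "\<dots> = - sphere_moment E j"
    using j by (simp add: power_minus_odd sphere_moment_def)
  finally show ?thesis by simp
qed

(* Applied to an orthonormal basis of E, the hypothesis makes almost every unit vector of E orthogonal
   to E itself. *)
lemma invariant_sphere_measure_not_AE_orthogonal:
  fixes E :: "'a::euclidean_space set"
  assumes t: "invariant_sphere_measure E \<tau>" and E: "subspace E"
    and ae: "\<And>e. e \<in> sphere 0 1 \<inter> E \<Longrightarrow> AE z in \<tau>. z \<bullet> e = 0"
  shows False
proof -
  interpret prob_space \<tau> by (rule prob_space_invariant_sphere_measure[OF t])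
  obtain B where B: "B \<subseteq> E" "\<And>x. x \<in> B \<Longrightarrow> norm x = 1" "independent B" "span B = E"
    using orthonormal_basis_subspace[OF E] by metis
  have "AE z in \<tau>. \<forall>b\<in>B. z \<bullet> b = 0"
    using finiteI_independent[OF B(3)] by (rule AE_finite_allI) (use ae B in auto)
  then have "AE z in \<tau>. False"
  proof (rule AE_mp, intro AE_I2 impI)
    fix z assume z: "z \<in> space \<tau>" and zb: "\<forall>b\<in>B. z \<bullet> b = 0"
    have zE: "z \<in> span B" "norm z = 1" using z space_invariant_sphere_measure[OF t] B(4) by auto
    have "orthogonal z z"
      by (rule orthogonal_to_span[OF zE(1)]) (use zb in \<open>simp add: orthogonal_def\<close>)
    then show False using zE(2) by (simp add: orthogonal_self)
  qed
  then have "emeasure \<tau> (space \<tau>) = 0" using ae_filter_eq_bot_iff eventually_False by blast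
  then show False using emeasure_space_1 by simp
qed

lemma sphere_moment_even_pos:
  fixes E :: "'a::euclidean_space set"
  assumes E: "subspace E" and d: "dim E \<ge> 1"
  shows "sphere_moment E (2 * k) > 0"
proof (cases "k = 0")
  case True
  then show ?thesis
    using prob_space.prob_space[OF prob_space_invariant_sphere_measure[OF invariant_haar_sphere[OF E d]]]
    by (simp add: sphere_moment_def)
next
  case False
  let ?\<sigma> = "haar_sphere E"
  have t: "invariant_sphere_measure E ?\<sigma>" by (rule invariant_haar_sphere[OF E d])
  have "sphere_moment E (2 * k) \<ge> 0" unfolding sphere_moment_def
    by (intro Bochner_Integration.integral_nonneg) (simp add: zero_le_even_power)
  moreover have "sphere_moment E (2 * k) \<noteq> 0"
  proof
    assume moment0: "sphere_moment E (2 * k) = 0"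
    have "AE z in ?\<sigma>. z \<bullet> e = 0" if e: "e \<in> sphere 0 1 \<inter> E" for e
    proof -
      have "integrable ?\<sigma> (\<lambda>z. (z \<bullet> e) ^ (2 * k))"
        by (rule integrable_invariant_sphere_measure[OF t E]) (intro continuous_intros)
      moreover have "AE z in ?\<sigma>. 0 \<le> (z \<bullet> e) ^ (2 * k)" by (simp add: zero_le_even_power)
      moreover have "(\<integral>z. (z \<bullet> e) ^ (2 * k) \<partial>?\<sigma>) = 0"
        using integral_haar_sphere_inner_power[OF E d e] moment0 by simp
      ultimately have "AE z in ?\<sigma>. (z \<bullet> e) ^ (2 * k) = 0"
        using integral_nonneg_eq_0_iff_AE by blast
      then show ?thesis by eventually_elim (use False in simp)
    qed
    then show False by (rule invariant_sphere_measure_not_AE_orthogonal[OF t E])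
  qed
  ultimately show ?thesis by simp
qed

lemma invariant_sphere_measure_distr_orthogonal_transformation:
  fixes E F :: "'a::euclidean_space set"
  assumes t: "invariant_sphere_measure E \<tau>"
    and U: "orthogonal_transformation U" and UE: "U ` E = F"
  shows "invariant_sphere_measure F (distr \<tau> (restrict_space borel (sphere 0 1 \<inter> F)) U)"
  unfolding invariant_sphere_measure_def
proof (intro conjI allI impI)
  let ?RF = "restrict_space borel (sphere 0 1 \<inter> F)"
  let ?\<rho> = "distr \<tau> ?RF U"
  have Um: "U \<in> measurable \<tau> ?RF"
    using measurable_orthogonal_transformation_sphere[OF U UE]
      measurable_cong_sets[OF sets_invariant_sphere_measure[OF t] refl] by blast
  show "sets ?\<rho> = sets ?RF" by simp
  have "space ?\<rho> \<in> sets ?RF" using sets.top[of ?\<rho>] by simp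
  moreover have "U -` space ?\<rho> \<inter> space \<tau> = space \<tau>"
    using U UE space_invariant_sphere_measure[OF t]
    by (auto simp: space_restrict_space orthogonal_transformation_norm)
  ultimately show "emeasure ?\<rho> (space ?\<rho>) = 1"
    using emeasure_distr[OF Um] t by (simp add: invariant_sphere_measure_def)
  fix T assume T: "orthogonal_transformation T \<and> T ` F = F"
  define V where "V = inv U \<circ> T \<circ> U"
  have V: "orthogonal_transformation V" "V ` E = E"
  proof -
    show "orthogonal_transformation V" unfolding V_def
      using orthogonal_transformation_compose[OF orthogonal_transformation_inv[OF U]
              orthogonal_transformation_compose[OF conjunct1[OF T] U]]
      by (simp add: o_def comp_def)
    have "V ` E = inv U ` T ` U ` E" by (simp add: V_def image_comp)
    also have "\<dots> = E" using UE T orthogonal_transformation_inj[OF U] by (auto simp: image_comp)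
    finally show "V ` E = E" .
  qed
  have UV: "U \<circ> V = T \<circ> U" unfolding V_def
    using orthogonal_transformation_surj[OF U] by (auto simp: fun_eq_iff surj_f_inv_f)
  have Tm: "T \<in> measurable ?RF ?RF"
    using measurable_orthogonal_transformation_sphere[of T F F] T by blast
  have "distr ?\<rho> ?\<rho> T = distr ?\<rho> ?RF T" by (rule distr_cong) auto
  also have "\<dots> = distr \<tau> ?RF (T \<circ> U)" by (rule distr_distr[OF Tm Um])
  also have "\<dots> = distr \<tau> ?RF (U \<circ> V)" by (simp add: UV)
  also have "\<dots> = distr (distr \<tau> \<tau> V) ?RF U"
    by (rule distr_distr[symmetric, OF Um measurable_orthogonal_transformation_invariant_sphere_measure[OF t V]])
  also have "distr \<tau> \<tau> V = \<tau>" by (rule distr_invariant_sphere_measure[OF t V])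
  finally show "distr ?\<rho> ?\<rho> T = ?\<rho>" .
qed

lemma haar_sphere_orthogonal_image:
  fixes E F :: "'a::euclidean_space set"
  assumes E: "subspace E" and d: "dim E \<ge> 1"
    and U: "orthogonal_transformation U" and UE: "U ` E = F"
  shows "haar_sphere F = distr (haar_sphere E) (restrict_space borel (sphere 0 1 \<inter> F)) U"
proof -
  have F: "subspace F" using UE E orthogonal_transformation_linear[OF U] linear_subspace_image by blast
  have "inj_on U (span E)"
    using orthogonal_transformation_inj[OF U] by (metis inj_on_subset subset_UNIV)
  then have "dim F = dim E"
    using UE dim_image_eq[OF orthogonal_transformation_linear[OF U]] by metis
  then show ?thesis
    using invariant_sphere_measure_unique[OF invariant_haar_sphere[OF F]
        invariant_sphere_measure_distr_orthogonal_transformation[OF invariant_haar_sphere[OF E d] U UE] F] d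
    by simp
qed

lemma sphere_moment_grass_eq:
  fixes E F :: "'a::euclidean_space set"
  assumes E: "E \<in> grass m" and F: "F \<in> grass m" and m: "m \<ge> 1"
  shows "sphere_moment E j = sphere_moment F j"
proof -
  have sE: "subspace E" "dim E \<ge> 1" and sF: "subspace F" "dim F \<ge> 1" using E F m by (auto simp: grass_def)
  have "dim E = dim F" using E F by (simp add: grass_def)
  then obtain U where U: "orthogonal_transformation U" "U ` E = F"
    using orthogonal_transformation_between_subspaces[OF sE(1) sF(1)] by blast
  let ?e = "sphere_point E"
  have t: "invariant_sphere_measure E (haar_sphere E)" by (rule invariant_haar_sphere[OF sE])
  have Um: "U \<in> measurable (haar_sphere E) (restrict_space borel (sphere 0 1 \<inter> F))"
    using measurable_orthogonal_transformation_sphere[OF U]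
      measurable_cong_sets[OF sets_invariant_sphere_measure[OF t] refl] by blast
  have "U ?e \<in> sphere 0 1 \<inter> F"
    using sphere_point_in[OF sE] U by (auto simp: orthogonal_transformation_norm)
  then have "sphere_moment F j = (\<integral>z. (z \<bullet> U ?e) ^ j \<partial>haar_sphere F)"
    by (rule integral_haar_sphere_inner_power[OF sF, symmetric])
  also have "\<dots> = (\<integral>z. (U z \<bullet> U ?e) ^ j \<partial>haar_sphere E)"
    unfolding haar_sphere_orthogonal_image[OF sE U] using Um
    by (rule integral_distr) (rule measurable_restrict_space1, measurable)
  also have "\<dots> = sphere_moment E j"
    using U(1) by (simp add: orthogonal_transformation_inner sphere_moment_def)
  finally show ?thesis by simp
qed

section \<open>The Grassmannian as a measurable space\<close>

lemma zero_in_cball_Int_subspace: "subspace E \<Longrightarrow> (0::'a::euclidean_space) \<in> cball 0 1 \<inter> E"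
  by (simp add: subspace_0)

lemma closed_cball_Int_subspace: "subspace (E::'a::euclidean_space set) \<Longrightarrow> closed (cball 0 1 \<inter> E)"
  by (intro closed_Int) (auto simp: closed_subspace)

lemma infdist_le_gdist:
  fixes E F :: "'a::euclidean_space set"
  assumes E: "subspace E" and F: "subspace F"
  shows "x \<in> cball 0 1 \<inter> E \<Longrightarrow> infdist x (cball 0 1 \<inter> F) \<le> gdist E F"
    and "y \<in> cball 0 1 \<inter> F \<Longrightarrow> infdist y (cball 0 1 \<inter> E) \<le> gdist E F"
proof -
  have bdd: "infdist x (cball 0 1 \<inter> G) \<le> 1" if "subspace G" "x \<in> cball 0 1" for G and x :: 'a
    using infdist_le[OF zero_in_cball_Int_subspace[OF that(1)], of x] that(2) by simp
  show "infdist x (cball 0 1 \<inter> F) \<le> gdist E F" if "x \<in> cball 0 1 \<inter> E"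
    using cSUP_upper[OF that, of "\<lambda>x. infdist x (cball 0 1 \<inter> F)"] bdd[OF F]
    unfolding gdist_def by (force intro: bdd_aboveI[where M=1])
  show "infdist y (cball 0 1 \<inter> E) \<le> gdist E F" if "y \<in> cball 0 1 \<inter> F"
    using cSUP_upper[OF that, of "\<lambda>y. infdist y (cball 0 1 \<inter> E)"] bdd[OF E]
    unfolding gdist_def by (force intro: bdd_aboveI[where M=1])
qed

lemma gdist_le:
  fixes E F :: "'a::euclidean_space set"
  assumes E: "subspace E" and F: "subspace F"
    and "\<And>x. x \<in> cball 0 1 \<inter> E \<Longrightarrow> infdist x (cball 0 1 \<inter> F) \<le> s"
    and "\<And>y. y \<in> cball 0 1 \<inter> F \<Longrightarrow> infdist y (cball 0 1 \<inter> E) \<le> s"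
  shows "gdist E F \<le> s"
proof -
  have "cball 0 1 \<inter> E \<noteq> {}" "cball 0 1 \<inter> F \<noteq> {}"
    using zero_in_cball_Int_subspace[OF E] zero_in_cball_Int_subspace[OF F] by blast+
  then show ?thesis unfolding gdist_def using assms(3,4) by (auto intro!: cSUP_least)
qed

lemma norm_proj_le_norm_proj_add:
  fixes E F :: "'a::euclidean_space set"
  assumes E: "subspace E" and F: "subspace F"
    and h: "\<And>x. x \<in> cball 0 1 \<inter> E \<Longrightarrow> infdist x (cball 0 1 \<inter> F) \<le> g"
  shows "norm (proj E a) \<le> norm (proj F a) + norm a * g"
proof (cases "proj E a = 0")
  case True
  have "0 \<le> g" using h[OF zero_in_cball_Int_subspace[OF E]] infdist_nonneg[of 0] by (meson order_trans)
  then show ?thesis using True by simp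
next
  case False
  define p where "p = proj E a"
  define x where "x = p /\<^sub>R norm p"
  have xE: "x \<in> cball 0 1 \<inter> E" using proj_scaled_in_sphere[OF E False] by (simp add: x_def p_def)
  obtain y where y: "y \<in> cball 0 1 \<inter> F" "infdist x (cball 0 1 \<inter> F) = dist x y"
    using infdist_attains_inf[OF closed_cball_Int_subspace[OF F]] zero_in_cball_Int_subspace[OF F] by blast
  have "norm p = x \<bullet> p" using False by (simp add: x_def p_def power2_norm_eq_inner[symmetric] power2_eq_square)
  also have "\<dots> = x \<bullet> a" using inner_proj[OF E] xE by (simp add: p_def)
  also have "\<dots> = y \<bullet> a + (x - y) \<bullet> a" by (simp add: inner_diff_left)
  also have "y \<bullet> a = y \<bullet> proj F a" using inner_proj[OF F] y(1) by simp
  also have "\<dots> \<le> norm y * norm (proj F a)" by (rule Cauchy_Schwarz_ineq2[THEN abs_le_D1])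
  also have "\<dots> \<le> norm (proj F a)" using y(1) by (simp add: mult_left_le_one_le)
  also have "(x - y) \<bullet> a \<le> norm (x - y) * norm a" by (rule Cauchy_Schwarz_ineq2[THEN abs_le_D1])
  also have "norm (x - y) \<le> g" using h[OF xE] y(2) by (simp add: dist_norm)
  finally show ?thesis unfolding p_def by (simp add: mult_right_mono mult.commute)
qed

lemma abs_norm_proj_diff_le_gdist:
  fixes E F :: "'a::euclidean_space set"
  assumes E: "subspace E" and F: "subspace F"
  shows "\<bar>norm (proj E a) - norm (proj F a)\<bar> \<le> norm a * gdist E F"
  using norm_proj_le_norm_proj_add[OF E F infdist_le_gdist(1)[OF E F], of a]
    norm_proj_le_norm_proj_add[OF F E infdist_le_gdist(2)[OF E F], of a]
  by simp

(* With u = P_F x, the point x - u lies in the unit ball of F\<^sup>\<bottom>, and |u|\<^sup>2 = x \<bullet> (u - y) for every y \<in> E. *)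
lemma infdist_orthogonal_comp_le:
  fixes E F :: "'a::euclidean_space set"
  assumes E: "subspace E" and F: "subspace F"
    and h: "\<And>u. u \<in> cball 0 1 \<inter> F \<Longrightarrow> infdist u (cball 0 1 \<inter> E) \<le> g"
    and x: "x \<in> cball 0 1 \<inter> orthogonal_comp E"
  shows "infdist x (cball 0 1 \<inter> orthogonal_comp F) \<le> sqrt g"
proof -
  define u where "u = proj F x"
  have Fo: "subspace (orthogonal_comp F)" by (rule subspace_orthogonal_comp)
  have "x - u \<in> cball 0 1 \<inter> orthogonal_comp F"
    using proj_orthogonal_comp[OF F] proj_in[OF Fo, of x] norm_proj_le[OF Fo, of x] x by (auto simp: u_def)
  then have 1: "infdist x (cball 0 1 \<inter> orthogonal_comp F) \<le> norm u"
    using infdist_le[of "x - u" _ x] by (simp add: dist_norm)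
  have uF: "u \<in> cball 0 1 \<inter> F" using proj_in[OF F, of x] norm_proj_le[OF F, of x] x by (auto simp: u_def)
  obtain y where y: "y \<in> cball 0 1 \<inter> E" "infdist u (cball 0 1 \<inter> E) = dist u y"
    using infdist_attains_inf[OF closed_cball_Int_subspace[OF E]] zero_in_cball_Int_subspace[OF E] by blast
  have xy: "x \<bullet> y = 0" using x y(1) orthogonal_compD by (metis IntD2 inner_commute)
  have "(norm u)\<^sup>2 = u \<bullet> u" by (simp add: power2_norm_eq_inner)
  also have "\<dots> = u \<bullet> x" using inner_proj[OF F, of u x] uF by (simp add: u_def)
  also have "\<dots> = x \<bullet> (u - y)" using xy by (simp add: inner_diff_right inner_commute)
  also have "\<dots> \<le> norm x * norm (u - y)" by (rule Cauchy_Schwarz_ineq2[THEN abs_le_D1])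
  also have "\<dots> \<le> norm (u - y)" using x by (simp add: mult_left_le_one_le)
  also have "\<dots> \<le> g" using h[OF uF] y(2) by (simp add: dist_norm)
  finally have "norm u \<le> sqrt g" by (simp add: real_le_rsqrt)
  with 1 show ?thesis by linarith
qed

lemma gdist_orthogonal_comp_le:
  fixes E F :: "'a::euclidean_space set"
  assumes E: "subspace E" and F: "subspace F"
  shows "gdist (orthogonal_comp E) (orthogonal_comp F) \<le> sqrt (gdist E F)"
  by (rule gdist_le[OF subspace_orthogonal_comp subspace_orthogonal_comp])
     (auto intro: infdist_orthogonal_comp_le[OF E F infdist_le_gdist(2)[OF E F]]
                  infdist_orthogonal_comp_le[OF F E infdist_le_gdist(1)[OF E F]])

lemma sets_grass_borel: "sets (grass_borel m) = sigma_sets (grass m) {U. grass_open m U}"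
  unfolding grass_borel_def by (rule sets_measure_of) (auto simp: grass_open_def)

lemma space_grass_borel: "space (grass_borel m) = grass m"
  unfolding grass_borel_def by (rule space_measure_of) (auto simp: grass_open_def)

lemma grass_open_in_sets: "grass_open m U \<Longrightarrow> U \<in> sets (grass_borel m)"
  by (simp add: sets_grass_borel)

lemma grass_borel_measurableI:
  assumes cont: "\<And>E e. E \<in> grass m \<Longrightarrow> e > 0 \<Longrightarrow> \<exists>d>0. \<forall>F\<in>grass m. gdist E F < d \<longrightarrow> \<bar>f F - f E\<bar> < e"
  shows "(f :: 'a::euclidean_space set \<Rightarrow> real) \<in> borel_measurable (grass_borel m)"
proof (rule borel_measurableI)
  fix S :: "real set" assume S: "open S"
  have "grass_open m (f -` S \<inter> grass m)"
    unfolding grass_open_def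
  proof (intro conjI ballI)
    fix E assume E: "E \<in> f -` S \<inter> grass m"
    then obtain e where e: "e > 0" "ball (f E) e \<subseteq> S" using S open_contains_ball by blast
    obtain d where d: "d > 0" "\<forall>F\<in>grass m. gdist E F < d \<longrightarrow> \<bar>f F - f E\<bar> < e"
      using cont[of E e] E e by blast
    have "F \<in> f -` S \<inter> grass m" if "F \<in> grass m" "gdist E F < d" for F
    proof -
      have "\<bar>f F - f E\<bar> < e" using d that by blast
      then have "f F \<in> ball (f E) e" unfolding mem_ball dist_real_def by (metis abs_minus_commute)
      then show ?thesis using e that by blast
    qed
    then show "\<exists>e>0. \<forall>F\<in>grass m. gdist E F < e \<longrightarrow> F \<in> f -` S \<inter> grass m"
      using d(1) by blast
  qed blast
  then show "f -` S \<inter> space (grass_borel m) \<in> sets (grass_borel m)"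
    by (simp add: space_grass_borel grass_open_in_sets)
qed

lemma borel_measurable_norm_proj:
  "(\<lambda>E. norm (proj E a)) \<in> borel_measurable (grass_borel m)"
proof (rule grass_borel_measurableI)
  fix E :: "'a set" and e :: real assume E: "E \<in> grass m" and e: "e > 0"
  have "\<bar>norm (proj F a) - norm (proj E a)\<bar> < e"
    if F: "F \<in> grass m" and d: "gdist E F < e / (norm a + 1)" for F
  proof -
    have "\<bar>norm (proj F a) - norm (proj E a)\<bar> \<le> norm a * gdist E F"
      using abs_norm_proj_diff_le_gdist[of E F a] E F by (simp add: grass_def abs_minus_commute)
    also have "\<dots> \<le> norm a * (e / (norm a + 1))" using d by (intro mult_left_mono) auto
    also have "\<dots> < (norm a + 1) * (e / (norm a + 1))"
      using e by (intro mult_strict_right_mono) (auto simp: add_nonneg_pos)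
    also have "\<dots> = e"
    proof -
      have "norm a + 1 > 0" using norm_ge_zero[of a] by linarith
      then show ?thesis by simp
    qed
    finally show ?thesis .
  qed
  moreover have "e / (norm a + 1) > 0" using e by (simp add: add_nonneg_pos)
  ultimately show "\<exists>d>0. \<forall>F\<in>grass m. gdist E F < d \<longrightarrow> \<bar>norm (proj F a) - norm (proj E a)\<bar> < e"
    by blast
qed

lemma measurable_orthogonal_comp:
  assumes k: "k = DIM('a) - m"
  shows "(orthogonal_comp :: 'a::euclidean_space set \<Rightarrow> 'a set) \<in> measurable (grass_borel m) (grass_borel k)"
  unfolding grass_borel_def[of k]
proof (rule measurable_measure_of)
  show "orthogonal_comp \<in> space (grass_borel m) \<rightarrow> (grass k :: 'a set set)"
    using orthogonal_comp_in_grass k by (auto simp: space_grass_borel)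
  fix A :: "'a set set" assume "A \<in> {U. grass_open k U}"
  then have A: "grass_open k A" by simp
  have "grass_open m (orthogonal_comp -` A \<inter> grass m)"
    unfolding grass_open_def
  proof (intro conjI ballI)
    fix E :: "'a set" assume E: "E \<in> orthogonal_comp -` A \<inter> grass m"
    then obtain e where e: "e > 0" "\<forall>F'\<in>grass k. gdist (orthogonal_comp E) F' < e \<longrightarrow> F' \<in> A"
      using A unfolding grass_open_def by blast
    have "F \<in> orthogonal_comp -` A \<inter> grass m" if F: "F \<in> grass m" and d: "gdist E F < e\<^sup>2" for F
    proof -
      have "gdist (orthogonal_comp E) (orthogonal_comp F) \<le> sqrt (gdist E F)"
        using gdist_orthogonal_comp_le E F by (auto simp: grass_def)
      also have "\<dots> < e" using real_sqrt_less_mono[OF d] e by simp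
      finally show ?thesis using e(2) orthogonal_comp_in_grass[OF F] k F by auto
    qed
    then show "\<exists>d>0. \<forall>F\<in>grass m. gdist E F < d \<longrightarrow> F \<in> orthogonal_comp -` A \<inter> grass m"
      using e(1) by (intro exI[of _ "e\<^sup>2"]) auto
  qed blast
  then show "orthogonal_comp -` A \<inter> space (grass_borel m) \<in> sets (grass_borel m)"
    by (simp add: space_grass_borel grass_open_in_sets)
qed (auto simp: grass_open_def)

section \<open>The spherical Radon transform of exponentials\<close>

lemma integral_suminf_bounded:
  fixes f :: "nat \<Rightarrow> 'b \<Rightarrow> real"
  assumes M: "finite_measure M"
    and f: "\<And>i. f i \<in> borel_measurable M"
    and bound: "\<And>i x. x \<in> space M \<Longrightarrow> \<bar>f i x\<bar> \<le> b i" and b: "summable b"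
  shows "(\<integral>x. (\<Sum>i. f i x) \<partial>M) = (\<Sum>i. integral\<^sup>L M (f i))"
proof -
  interpret finite_measure M by (rule M)
  have int: "integrable M (f i)" for i
    by (rule integrable_const_bound[where B="b i"]) (use bound f in auto)
  show ?thesis
  proof (rule integral_suminf[OF int])
    show "AE x in M. summable (\<lambda>i. norm (f i x))"
      by (intro AE_I2 summable_comparison_test'[OF b]) (use bound in auto)
    have "(\<integral>x. norm (f i x) \<partial>M) \<le> b i * measure M (space M)" for i
      using integral_mono[of M "\<lambda>x. norm (f i x)" "\<lambda>_. b i"] int bound by (simp add: mult.commute)
    then show "summable (\<lambda>i. \<integral>x. norm (f i x) \<partial>M)"
      by (intro summable_comparison_test'[OF summable_mult2[OF b]]) auto
  qed
qed

lemma abs_radon_le: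
  fixes F :: "'a::euclidean_space set"
  assumes F: "subspace F" "dim F \<ge> 1" and f: "continuous_on (sphere 0 1) f"
    and B: "\<And>z. z \<in> sphere 0 1 \<Longrightarrow> \<bar>f z\<bar> \<le> B"
  shows "\<bar>radon f F\<bar> \<le> B"
  unfolding radon_def
  by (rule abs_integral_invariant_sphere_measure_le[OF invariant_haar_sphere[OF F] F(1)])
     (use B continuous_on_subset[OF f] in auto)

lemma radon_add:
  fixes F :: "'a::euclidean_space set"
  assumes F: "subspace F" "dim F \<ge> 1"
    and f: "continuous_on (sphere 0 1) f" and g: "continuous_on (sphere 0 1) g"
  shows "radon (\<lambda>z. f z + g z) F = radon f F + radon g F"
    and "radon (\<lambda>z. f z - g z) F = radon f F - radon g F"
  using integrable_invariant_sphere_measure[OF invariant_haar_sphere[OF F] F(1)]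
    continuous_on_subset[OF f, of "sphere 0 1 \<inter> F"] continuous_on_subset[OF g, of "sphere 0 1 \<inter> F"]
  by (simp_all add: radon_def)

lemma abs_sphere_moment_le_1:
  fixes F :: "'a::euclidean_space set"
  assumes F: "subspace F" "dim F \<ge> 1"
  shows "\<bar>sphere_moment F n\<bar> \<le> 1"
  unfolding sphere_moment_def
proof (rule abs_integral_invariant_sphere_measure_le[OF invariant_haar_sphere[OF F] F(1)])
  fix z :: 'a assume "z \<in> sphere 0 1 \<inter> F"
  then have "\<bar>z \<bullet> sphere_point F\<bar> \<le> 1"
    using Cauchy_Schwarz_ineq2[of z "sphere_point F"] sphere_point_in[OF F] by simp
  then show "\<bar>(z \<bullet> sphere_point F) ^ n\<bar> \<le> 1" by (simp add: power_abs power_le_one)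
qed (intro continuous_intros)

lemma summable_power_div_fact: "summable (\<lambda>n. (r::real) ^ n / fact n)"
  using summable_exp[of r] by (simp add: divide_inverse mult.commute)

lemma radon_exp_inner:
  fixes F :: "'a::euclidean_space set"
  assumes F: "subspace F" "dim F \<ge> 1"
  shows "radon (\<lambda>z. exp (z \<bullet> a)) F = (\<Sum>n. sphere_moment F n / fact n * norm (proj F a) ^ n)"
proof -
  have t: "invariant_sphere_measure F (haar_sphere F)" by (rule invariant_haar_sphere[OF F])
  have "radon (\<lambda>z. exp (z \<bullet> a)) F = (\<integral>z. (\<Sum>n. (z \<bullet> a) ^ n / fact n) \<partial>haar_sphere F)"
    unfolding radon_def exp_def by (simp add: divide_inverse_commute scaleR_conv_of_real)
  also have "\<dots> = (\<Sum>n. \<integral>z. (z \<bullet> a) ^ n / fact n \<partial>haar_sphere F)"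
  proof (rule integral_suminf_bounded[where b="\<lambda>n. norm a ^ n / fact n"])
    show "finite_measure (haar_sphere F)"
      using prob_space_invariant_sphere_measure[OF t] by (simp add: prob_space_def)
    show "(\<lambda>z. (z \<bullet> a) ^ n / fact n) \<in> borel_measurable (haar_sphere F)" for n
      by (rule borel_measurable_invariant_sphere_measure[OF t]) measurable
    fix n and z assume "z \<in> space (haar_sphere F)"
    then have "\<bar>z \<bullet> a\<bar> \<le> norm a"
      using Cauchy_Schwarz_ineq2[of z a] space_invariant_sphere_measure[OF t] by auto
    then show "\<bar>(z \<bullet> a) ^ n / fact n\<bar> \<le> norm a ^ n / fact n"
      by (simp add: power_abs divide_right_mono power_mono)
  qed (rule summable_power_div_fact)
  also have "\<dots> = (\<Sum>n. sphere_moment F n / fact n * norm (proj F a) ^ n)"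
    using integral_haar_sphere_inner_power_proj[OF F, of a] by simp
  finally show ?thesis .
qed

lemma radon_exp_sum:
  fixes F :: "'a::euclidean_space set"
  assumes F: "subspace F" "dim F \<ge> 1"
  shows "radon (exp_sum L) F = (\<Sum>(c, a)\<leftarrow>L. c * radon (\<lambda>z. exp (z \<bullet> a)) F)"
proof (induction L)
  case (Cons p L)
  obtain c a where p: "p = (c, a)" by (cases p)
  have "exp_sum (p # L) = (\<lambda>z. c * exp (z \<bullet> a) + exp_sum L z)" by (simp add: p fun_eq_iff)
  then have "radon (exp_sum (p # L)) F = radon (\<lambda>z. c * exp (z \<bullet> a) + exp_sum L z) F"
    by simp
  also have "\<dots> = c * radon (\<lambda>z. exp (z \<bullet> a)) F + radon (exp_sum L) F"
    using radon_add(1)[OF F, of "\<lambda>z. c * exp (z \<bullet> a)" "exp_sum L"]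
    by (simp add: continuous_on_exp_sum continuous_intros radon_def)
  finally show ?case using Cons by (simp add: p del: exp_sum_Cons)
qed (simp add: radon_def exp_sum_def[abs_def])

section \<open>Finite measures on a Grassmannian\<close>

locale grass_measure = finite_measure M for M :: "'a::euclidean_space set measure" +
  fixes j :: nat
  assumes sets_eq: "sets M = sets (grass_borel j)" and dim_pos: "1 \<le> j" and dim_le: "j \<le> DIM('a)"
begin

lemma space_eq: "space M = grass j"
  using sets_eq_imp_space_eq[OF sets_eq] by (simp add: space_grass_borel)

lemma subspace_in_space:
  assumes "E \<in> space M" shows "subspace E" "1 \<le> dim E"
  using assms dim_pos by (auto simp: space_eq grass_def)

lemma borel_measurable_norm_proj_M [measurable]: "(\<lambda>E. norm (proj E a)) \<in> borel_measurable M"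
  using borel_measurable_norm_proj measurable_cong_sets[OF sets_eq refl] by blast

lemma radon_exp_inner_in_space:
  fixes F :: "'a set"
  assumes "E \<in> space M" "F \<in> grass j"
  shows "radon (\<lambda>z. exp (z \<bullet> a)) E = (\<Sum>n. sphere_moment F n / fact n * norm (proj E a) ^ n)"
  using radon_exp_inner[OF subspace_in_space[OF assms(1)]] sphere_moment_grass_eq[of E j F] assms dim_pos
  by (simp add: space_eq)

lemma borel_measurable_radon_exp_sum: "radon (exp_sum L) \<in> borel_measurable M"
proof -
  obtain F :: "'a set" where F: "F \<in> grass j" using grass_nonempty[OF dim_le] by blast
  have [measurable]: "(\<lambda>E. radon (\<lambda>z. exp (z \<bullet> a)) E) \<in> borel_measurable M" for a
    using radon_exp_inner_in_space[OF _ F] by (subst measurable_cong) auto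
  have "(\<lambda>E. \<Sum>(c, a)\<leftarrow>L. c * radon (\<lambda>z. exp (z \<bullet> a)) E) \<in> borel_measurable M"
    by (induction L) auto
  then show ?thesis
    by (rule measurable_cong[THEN iffD1, rotated]) (simp add: radon_exp_sum[OF subspace_in_space])
qed

lemma abs_radon_diff_le:
  assumes f: "continuous_on (sphere 0 1) f" and g: "continuous_on (sphere 0 1) g"
    and e: "\<And>z. z \<in> sphere 0 1 \<Longrightarrow> \<bar>f z - g z\<bar> \<le> e" and E: "E \<in> space M"
  shows "\<bar>radon f E - radon g E\<bar> \<le> e"
proof -
  have "\<bar>radon (\<lambda>z. f z - g z) E\<bar> \<le> e"
    using f g e by (intro abs_radon_le[OF subspace_in_space[OF E]] continuous_intros)
  then show ?thesis using radon_add(2)[OF subspace_in_space[OF E] f g] by simp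
qed

(* radon f is the uniform limit of the measurable functions radon (exp_sum L). *)
lemma borel_measurable_radon:
  assumes f: "continuous_on (sphere 0 1) f"
  shows "radon f \<in> borel_measurable M"
proof -
  have "\<exists>L. \<forall>x\<in>sphere 0 1. \<bar>f x - exp_sum L x\<bar> < 1 / Suc (Suc k)" for k :: nat
  proof -
    obtain L where "\<And>x. x \<in> sphere 0 1 \<Longrightarrow> \<bar>f x - exp_sum L x\<bar> < 1 / Suc (Suc k)"
      using exp_sum_dense[OF compact_sphere f, of "1 / Suc (Suc k)"] by auto
    then show ?thesis by blast
  qed
  then obtain L where L: "\<And>k x. x \<in> sphere 0 1 \<Longrightarrow> \<bar>f x - exp_sum (L k) x\<bar> < 1 / Suc (Suc k)"
    by metis
  show ?thesis
  proof (rule borel_measurable_LIMSEQ_real[where u="\<lambda>k. radon (exp_sum (L k))"])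
    fix E assume E: "E \<in> space M"
    have "\<bar>radon (exp_sum (L k)) E - radon f E\<bar> \<le> 1 / Suc (Suc k)" for k
      using abs_radon_diff_le[OF f continuous_on_exp_sum _ E, of "L k" "1 / Suc (Suc k)"] L[of _ k]
      by (simp add: abs_minus_commute less_imp_le)
    also have "1 / Suc (Suc k) < 1 / Suc k" for k by (simp add: field_simps)
    finally have "(\<lambda>k. radon (exp_sum (L k)) E - radon f E) \<longlonglongrightarrow> 0"
      by (intro LIMSEQ_norm_0) simp
    then show "(\<lambda>k. radon (exp_sum (L k)) E) \<longlonglongrightarrow> radon f E" by (simp add: LIM_zero_iff)
  qed (rule borel_measurable_radon_exp_sum)
qed

lemma integrable_radon:
  assumes f: "continuous_on (sphere 0 1) f"
  shows "integrable M (radon f)"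
proof -
  obtain B where "\<And>z. z \<in> sphere 0 1 \<Longrightarrow> \<bar>f z\<bar> \<le> B"
    using bounded_continuous_on_compact[OF compact_sphere f] by blast
  then show ?thesis
    using abs_radon_le[OF subspace_in_space] borel_measurable_radon[OF f] f
    by (intro integrable_const_bound[where B=B]) auto
qed

lemma abs_integral_radon_diff_le:
  assumes f: "continuous_on (sphere 0 1) f" and g: "continuous_on (sphere 0 1) g"
    and e: "\<And>z. z \<in> sphere 0 1 \<Longrightarrow> \<bar>f z - g z\<bar> \<le> e"
  shows "\<bar>(\<integral>E. radon f E \<partial>M) - (\<integral>E. radon g E \<partial>M)\<bar> \<le> measure M (space M) * e"
proof -
  have "\<bar>(\<integral>E. radon f E \<partial>M) - (\<integral>E. radon g E \<partial>M)\<bar> = \<bar>\<integral>E. radon f E - radon g E \<partial>M\<bar>"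
    using integrable_radon[OF f] integrable_radon[OF g] by simp
  also have "\<dots> \<le> (\<integral>E. \<bar>radon f E - radon g E\<bar> \<partial>M)" by (rule integral_abs_bound)
  also have "\<dots> \<le> (\<integral>E. e \<partial>M)"
    using abs_radon_diff_le[OF f g e] integrable_radon[OF f] integrable_radon[OF g]
    by (intro integral_mono) auto
  finally show ?thesis by (simp add: mult.commute)
qed

lemma integral_radon_inner_power:
  fixes F :: "'a set"
  assumes F: "F \<in> grass j"
  shows "(\<integral>E. radon (\<lambda>z. (z \<bullet> a) ^ n) E \<partial>M) = sphere_moment F n * (\<integral>E. norm (proj E a) ^ n \<partial>M)"
proof -
  have "radon (\<lambda>z. (z \<bullet> a) ^ n) E = sphere_moment F n * norm (proj E a) ^ n" if "E \<in> space M" for E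
    using integral_haar_sphere_inner_power_proj[OF subspace_in_space[OF that]] that F dim_pos
      sphere_moment_grass_eq[of E j F]
    by (simp add: radon_def space_eq)
  then show ?thesis by (simp cong: Bochner_Integration.integral_cong)
qed

lemma integral_radon_exp_inner:
  fixes F :: "'a set"
  assumes F: "F \<in> grass j"
  shows "(\<integral>E. radon (\<lambda>z. exp (z \<bullet> a)) E \<partial>M) =
     (\<Sum>n. sphere_moment F n / fact n * (\<integral>E. norm (proj E a) ^ n \<partial>M))"
proof -
  have "(\<integral>E. radon (\<lambda>z. exp (z \<bullet> a)) E \<partial>M) =
      (\<integral>E. (\<Sum>n. sphere_moment F n / fact n * norm (proj E a) ^ n) \<partial>M)"
    using radon_exp_inner_in_space[OF _ F] by (simp cong: Bochner_Integration.integral_cong)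
  also have "\<dots> = (\<Sum>n. \<integral>E. sphere_moment F n / fact n * norm (proj E a) ^ n \<partial>M)"
  proof (rule integral_suminf_bounded[where b="\<lambda>n. norm a ^ n / fact n"])
    fix n E assume E: "E \<in> space M"
    have "\<bar>sphere_moment F n\<bar> * norm (proj E a) ^ n \<le> 1 * norm a ^ n"
      using abs_sphere_moment_le_1[of F n] F dim_pos norm_proj_le[OF subspace_in_space(1)[OF E], of a]
      by (intro mult_mono power_mono) (auto simp: grass_def)
    then show "\<bar>sphere_moment F n / fact n * norm (proj E a) ^ n\<bar> \<le> norm a ^ n / fact n"
      by (simp add: abs_mult divide_right_mono)
  qed (simp_all add: finite_measure_axioms summable_power_div_fact)
  finally show ?thesis by simp
qed

lemma integral_radon_exp_sum:
  "(\<integral>E. radon (exp_sum L) E \<partial>M) = (\<Sum>(c, a)\<leftarrow>L. c * (\<integral>E. radon (\<lambda>z. exp (z \<bullet> a)) E \<partial>M))"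
proof (induction L)
  case (Cons p L)
  obtain c a where p: "p = (c, a)" by (cases p)
  have "radon (exp_sum (p # L)) E = c * radon (\<lambda>z. exp (z \<bullet> a)) E + radon (exp_sum L) E"
    if "E \<in> space M" for E
    using radon_exp_sum[OF subspace_in_space[OF that], of "p # L"]
      radon_exp_sum[OF subspace_in_space[OF that], of L]
    by (simp add: p)
  then have "(\<integral>E. radon (exp_sum (p # L)) E \<partial>M) =
      (\<integral>E. c * radon (\<lambda>z. exp (z \<bullet> a)) E + radon (exp_sum L) E \<partial>M)"
    by (intro Bochner_Integration.integral_cong) auto
  also have "\<dots> = c * (\<integral>E. radon (\<lambda>z. exp (z \<bullet> a)) E \<partial>M) + (\<integral>E. radon (exp_sum L) E \<partial>M)"
    using integrable_radon[of "\<lambda>z. exp (z \<bullet> a)"] integrable_radon[OF continuous_on_exp_sum]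
    by (simp add: continuous_intros)
  finally show ?case using Cons by (simp add: p del: exp_sum_Cons)
qed (simp add: radon_def exp_sum_def[abs_def])

end

lemma grass_measure_signed_measures:
  assumes "\<mu> \<in> signed_measures (grass_borel j)" "1 \<le> j" "j \<le> DIM('a::euclidean_space)"
  shows "grass_measure (fst \<mu> :: 'a set measure) j" "grass_measure (snd \<mu>) j"
proof -
  obtain M1 M2 where "\<mu> = (M1, M2)" "finite_measure M1" "finite_measure M2"
    "sets M1 = sets (grass_borel j)" "sets M2 = sets (grass_borel j)"
    using assms(1) by (cases \<mu>) (simp add: signed_measures_def)
  then show "grass_measure (fst \<mu>) j" "grass_measure (snd \<mu>) j"
    using assms(2,3) by (simp_all add: grass_measure.intro grass_measure_axioms.intro)
qed

section \<open>The kernel of the dual Radon transform\<close>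

lemma radon_integrals_eq_imp_even_moments_eq:
  fixes M1 M2 :: "'a::euclidean_space set measure"
  assumes M1: "grass_measure M1 j" and M2: "grass_measure M2 j"
    and eq: "\<And>f. continuous_on (sphere 0 1) f \<Longrightarrow> (\<integral>E. radon f E \<partial>M1) = (\<integral>E. radon f E \<partial>M2)"
  shows "(\<integral>E. norm (proj E a) ^ (2 * d) \<partial>M1) = (\<integral>E. norm (proj E a) ^ (2 * d) \<partial>M2)"
proof -
  obtain F :: "'a set" where F: "F \<in> grass j"
    using grass_nonempty[OF grass_measure.dim_le[OF M1]] by blast
  have "sphere_moment F (2 * d) * (\<integral>E. norm (proj E a) ^ (2 * d) \<partial>M1) =
      sphere_moment F (2 * d) * (\<integral>E. norm (proj E a) ^ (2 * d) \<partial>M2)"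
    using eq[of "\<lambda>z. (z \<bullet> a) ^ (2 * d)", OF continuous_on_power[OF continuous_on_inner[OF
          continuous_on_id continuous_on_const]]]
    by (simp only: grass_measure.integral_radon_inner_power[OF M1 F]
      grass_measure.integral_radon_inner_power[OF M2 F])
  moreover have "sphere_moment F (2 * d) > 0"
    using F grass_measure.dim_pos[OF M1] by (intro sphere_moment_even_pos) (auto simp: grass_def)
  ultimately show ?thesis by simp
qed

(* Odd moments of \<sigma>_F vanish, so only even powers of |P_E a| enter the exponential series. *)
lemma even_moments_eq_imp_integral_radon_exp_inner_eq:
  fixes M1 M2 :: "'a::euclidean_space set measure"
  assumes M1: "grass_measure M1 j" and M2: "grass_measure M2 j"
    and eq: "\<And>a d. (\<integral>E. norm (proj E a) ^ (2 * d) \<partial>M1) = (\<integral>E. norm (proj E a) ^ (2 * d) \<partial>M2)"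
  shows "(\<integral>E. radon (\<lambda>z. exp (z \<bullet> a)) E \<partial>M1) = (\<integral>E. radon (\<lambda>z. exp (z \<bullet> a)) E \<partial>M2)"
proof -
  obtain F :: "'a set" where F: "F \<in> grass j"
    using grass_nonempty[OF grass_measure.dim_le[OF M1]] by blast
  have "sphere_moment F n / fact n * (\<integral>E. norm (proj E a) ^ n \<partial>M1) =
      sphere_moment F n / fact n * (\<integral>E. norm (proj E a) ^ n \<partial>M2)" for n
  proof (cases "even n")
    case True
    then obtain d where "n = 2 * d" by (rule evenE)
    then show ?thesis using eq[of a d] by (simp only:)
  next
    case False
    then show ?thesis
      using sphere_moment_odd[of F n] F grass_measure.dim_pos[OF M1] by (simp add: grass_def)
  qed
  then have "(\<lambda>n. sphere_moment F n / fact n * (\<integral>E. norm (proj E a) ^ n \<partial>M1)) =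
      (\<lambda>n. sphere_moment F n / fact n * (\<integral>E. norm (proj E a) ^ n \<partial>M2))"
    by (intro ext)
  then show ?thesis
    unfolding grass_measure.integral_radon_exp_inner[OF M1 F] grass_measure.integral_radon_exp_inner[OF M2 F]
    by (simp only:)
qed

lemma even_moments_eq_imp_radon_integrals_eq:
  fixes M1 M2 :: "'a::euclidean_space set measure"
  assumes M1: "grass_measure M1 j" and M2: "grass_measure M2 j"
    and eq: "\<And>a d. (\<integral>E. norm (proj E a) ^ (2 * d) \<partial>M1) = (\<integral>E. norm (proj E a) ^ (2 * d) \<partial>M2)"
    and f: "continuous_on (sphere 0 1) f"
  shows "(\<integral>E. radon f E \<partial>M1) = (\<integral>E. radon f E \<partial>M2)"
proof (rule functionals_eq_if_eq_on_exp_sums[OF compact_sphere f, where C="measure M1 (space M1) + measure M2 (space M2)"])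
  show "(\<integral>E. radon (exp_sum L) E \<partial>M1) = (\<integral>E. radon (exp_sum L) E \<partial>M2)" for L
    using even_moments_eq_imp_integral_radon_exp_inner_eq[OF M1 M2 eq]
    by (simp add: grass_measure.integral_radon_exp_sum[OF M1] grass_measure.integral_radon_exp_sum[OF M2])
  fix g e assume g: "continuous_on (sphere 0 1) g" and e: "0 \<le> e"
    and fg: "\<And>x. x \<in> sphere 0 1 \<Longrightarrow> \<bar>f x - g x\<bar> \<le> e"
  have "measure M1 (space M1) * e \<le> (measure M1 (space M1) + measure M2 (space M2)) * e"
    "measure M2 (space M2) * e \<le> (measure M1 (space M1) + measure M2 (space M2)) * e"
    using e by (simp_all add: mult_right_mono)
  then show "\<bar>(\<integral>E. radon f E \<partial>M1) - (\<integral>E. radon g E \<partial>M1)\<bar> \<le> (measure M1 (space M1) + measure M2 (space M2)) * e"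
    and "\<bar>(\<integral>E. radon f E \<partial>M2) - (\<integral>E. radon g E \<partial>M2)\<bar> \<le> (measure M1 (space M1) + measure M2 (space M2)) * e"
    using grass_measure.abs_integral_radon_diff_le[OF M1 f g fg]
      grass_measure.abs_integral_radon_diff_le[OF M2 f g fg] by linarith+
qed

lemma ker_Rstar_iff_even_moments_eq:
  assumes "1 \<le> j" "j \<le> DIM('a::euclidean_space)"
  shows "\<mu> \<in> (ker_Rstar j :: ('a set measure \<times> 'a set measure) set) \<longleftrightarrow>
    \<mu> \<in> signed_measures (grass_borel j) \<and>
    (\<forall>a d. (\<integral>E. norm (proj E a) ^ (2 * d) \<partial>fst \<mu>) = (\<integral>E. norm (proj E a) ^ (2 * d) \<partial>snd \<mu>))"
proof (cases "\<mu> \<in> signed_measures (grass_borel j)")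
  case True
  note M = grass_measure_signed_measures[OF True assms]
  have "(\<forall>f. continuous_on (sphere 0 1) f \<longrightarrow> (\<integral>E. radon f E \<partial>fst \<mu>) = (\<integral>E. radon f E \<partial>snd \<mu>)) \<longleftrightarrow>
    (\<forall>a d. (\<integral>E. norm (proj E a) ^ (2 * d) \<partial>fst \<mu>) = (\<integral>E. norm (proj E a) ^ (2 * d) \<partial>snd \<mu>))"
  proof (intro iffI allI impI)
    fix a d
    assume "\<forall>f. continuous_on (sphere 0 1) f \<longrightarrow> (\<integral>E. radon f E \<partial>fst \<mu>) = (\<integral>E. radon f E \<partial>snd \<mu>)"
    then show "(\<integral>E. norm (proj E a) ^ (2 * d) \<partial>fst \<mu>) = (\<integral>E. norm (proj E a) ^ (2 * d) \<partial>snd \<mu>)"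
      by (intro radon_integrals_eq_imp_even_moments_eq[OF M]) simp
  next
    fix f :: "'a \<Rightarrow> real"
    assume "\<forall>a d. (\<integral>E. norm (proj E a) ^ (2 * d) \<partial>fst \<mu>) = (\<integral>E. norm (proj E a) ^ (2 * d) \<partial>snd \<mu>)"
      and "continuous_on (sphere 0 1) f"
    then show "(\<integral>E. radon f E \<partial>fst \<mu>) = (\<integral>E. radon f E \<partial>snd \<mu>)"
      by (intro even_moments_eq_imp_radon_integrals_eq[OF M]) simp_all
  qed
  then show ?thesis using True by (simp add: ker_Rstar_def signed_integral_def)
qed (simp add: ker_Rstar_def)

lemma perp_measure_in_signed_measures:
  assumes "\<mu> \<in> signed_measures (grass_borel m)" and k: "k = DIM('a::euclidean_space) - m"
  shows "perp_measure k (\<mu> :: 'a set measure \<times> 'a set measure) \<in> signed_measures (grass_borel k)"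
proof -
  obtain M1 M2 where M: "\<mu> = (M1, M2)" "finite_measure M1" "finite_measure M2"
    "sets M1 = sets (grass_borel m)" "sets M2 = sets (grass_borel m)"
    using assms(1) by (cases \<mu>) (simp add: signed_measures_def)
  then have "orthogonal_comp \<in> measurable M1 (grass_borel k)" "orthogonal_comp \<in> measurable M2 (grass_borel k)"
    using measurable_orthogonal_comp[OF k] measurable_cong_sets[OF _ refl] by blast+
  then show ?thesis
    using M by (simp add: signed_measures_def perp_measure_def finite_measure.finite_measure_distr)
qed

lemma perp_measure_in_ker_Rstar_iff:
  assumes \<mu>: "\<mu> \<in> signed_measures (grass_borel m)"
    and k: "k = DIM('a::euclidean_space) - m" "1 \<le> k"
  shows "perp_measure k (\<mu> :: 'a set measure \<times> 'a set measure) \<in> ker_Rstar k \<longleftrightarrow>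
    (\<forall>a d. (\<integral>E. norm (proj (orthogonal_comp E) a) ^ (2 * d) \<partial>fst \<mu>) =
           (\<integral>E. norm (proj (orthogonal_comp E) a) ^ (2 * d) \<partial>snd \<mu>))"
proof -
  have distr: "(\<integral>F. norm (proj F a) ^ n \<partial>distr M (grass_borel k) orthogonal_comp) =
      (\<integral>E. norm (proj (orthogonal_comp E) a) ^ n \<partial>M)"
    if "sets M = sets (grass_borel m)" for M :: "'a set measure" and a n
  proof (rule integral_distr)
    show "orthogonal_comp \<in> measurable M (grass_borel k)"
      using measurable_orthogonal_comp[OF k(1)] measurable_cong_sets[OF that refl] by blast
    have [measurable]: "(\<lambda>F. norm (proj F a)) \<in> borel_measurable (grass_borel k)"
      by (rule borel_measurable_norm_proj)
    show "(\<lambda>F. norm (proj F a) ^ n) \<in> borel_measurable (grass_borel k)" by measurable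
  qed
  obtain M1 M2 where M12: "\<mu> = (M1, M2)" "sets M1 = sets (grass_borel m)" "sets M2 = sets (grass_borel m)"
    using \<mu> by (cases \<mu>) (auto simp: signed_measures_def)
  have "k \<le> DIM('a)" using k by simp
  then have "perp_measure k \<mu> \<in> ker_Rstar k \<longleftrightarrow>
    (\<forall>a d. (\<integral>F. norm (proj F a) ^ (2 * d) \<partial>fst (perp_measure k \<mu>)) =
           (\<integral>F. norm (proj F a) ^ (2 * d) \<partial>snd (perp_measure k \<mu>)))"
    using ker_Rstar_iff_even_moments_eq[OF k(2)] perp_measure_in_signed_measures[OF \<mu> k(1)] by blast
  also have "\<dots> \<longleftrightarrow> (\<forall>a d. (\<integral>E. norm (proj (orthogonal_comp E) a) ^ (2 * d) \<partial>fst \<mu>) =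
           (\<integral>E. norm (proj (orthogonal_comp E) a) ^ (2 * d) \<partial>snd \<mu>))"
    by (simp add: M12 perp_measure_def distr)
  finally show ?thesis .
qed

section \<open>Moments of complementary projections\<close>

lemma integral_power_diff_binomial:
  fixes u :: "'b \<Rightarrow> real"
  assumes M: "finite_measure M" and u: "u \<in> borel_measurable M"
    and bound: "\<And>x. x \<in> space M \<Longrightarrow> \<bar>u x\<bar> \<le> C"
  shows "(\<integral>x. (c - u x) ^ d \<partial>M) = (\<Sum>i\<le>d. of_nat (d choose i) * ((- 1) ^ i * (\<integral>x. u x ^ i \<partial>M)) * c ^ (d - i))"
proof -
  interpret finite_measure M by (rule M)
  have int: "integrable M (\<lambda>x. u x ^ i)" for i
  proof (rule integrable_const_bound[where B="C ^ i"])
    show "AE x in M. norm (u x ^ i) \<le> C ^ i"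
      using bound by (intro AE_I2) (simp add: power_abs power_mono)
  qed (use u in measurable)
  have "(c - u x) ^ d = (\<Sum>i\<le>d. of_nat (d choose i) * ((- 1) ^ i * u x ^ i) * c ^ (d - i))" for x
  proof -
    have "(c - u x) ^ d = ((- 1) * u x + c) ^ d" by simp
    also have "\<dots> = (\<Sum>i\<le>d. of_nat (d choose i) * ((- 1) * u x) ^ i * c ^ (d - i))"
      by (rule binomial_ring)
    finally show ?thesis by (simp only: power_mult_distrib)
  qed
  then have "(\<integral>x. (c - u x) ^ d \<partial>M) =
      (\<integral>x. (\<Sum>i\<le>d. of_nat (d choose i) * ((- 1) ^ i * u x ^ i) * c ^ (d - i)) \<partial>M)"
    by presburger
  also have "\<dots> = (\<Sum>i\<le>d. of_nat (d choose i) * ((- 1) ^ i * (\<integral>x. u x ^ i \<partial>M)) * c ^ (d - i))"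
    using int by simp
  finally show ?thesis .
qed

lemma moments_eq_imp_integral_power_diff_eq:
  fixes u :: "'b \<Rightarrow> real"
  assumes M1: "finite_measure M1" and M2: "finite_measure M2" and sets: "sets M1 = sets M2"
    and u: "u \<in> borel_measurable M1" and bound: "\<And>x. x \<in> space M1 \<Longrightarrow> \<bar>u x\<bar> \<le> C"
    and eq: "\<And>i. (\<integral>x. u x ^ i \<partial>M1) = (\<integral>x. u x ^ i \<partial>M2)"
  shows "(\<integral>x. (c - u x) ^ d \<partial>M1) = (\<integral>x. (c - u x) ^ d \<partial>M2)"
proof -
  have u2: "u \<in> borel_measurable M2" using u measurable_cong_sets[OF sets refl] by blast
  have bound2: "x \<in> space M2 \<Longrightarrow> \<bar>u x\<bar> \<le> C" for x using bound sets_eq_imp_space_eq[OF sets] by blast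
  have "(\<integral>x. (c - u x) ^ d \<partial>M2) =
      (\<Sum>i\<le>d. of_nat (d choose i) * ((- 1) ^ i * (\<integral>x. u x ^ i \<partial>M2)) * c ^ (d - i))"
    by (rule integral_power_diff_binomial[OF M2 u2 bound2])
  then show ?thesis using integral_power_diff_binomial[OF M1 u bound] eq by simp
qed

lemma even_moments_eq_imp_even_moments_orthogonal_comp_eq:
  fixes h :: "'b \<Rightarrow> 'a::euclidean_space set"
  assumes M1: "finite_measure M1" and M2: "finite_measure M2" and sets: "sets M1 = sets M2"
    and h: "\<And>E. E \<in> space M1 \<Longrightarrow> subspace (h E)"
    and meas: "\<And>a. (\<lambda>E. norm (proj (h E) a)) \<in> borel_measurable M1"
    and eq: "\<And>a d. (\<integral>E. norm (proj (h E) a) ^ (2 * d) \<partial>M1) = (\<integral>E. norm (proj (h E) a) ^ (2 * d) \<partial>M2)"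
  shows "(\<integral>E. norm (proj (orthogonal_comp (h E)) a) ^ (2 * d) \<partial>M1) =
         (\<integral>E. norm (proj (orthogonal_comp (h E)) a) ^ (2 * d) \<partial>M2)"
proof -
  have pyth: "norm (proj (orthogonal_comp (h E)) a) ^ (2 * d) = ((norm a)\<^sup>2 - (norm (proj (h E) a))\<^sup>2) ^ d"
    if "E \<in> space M1" for E
    using norm_proj_orthogonal_comp[OF h[OF that], of a] by (simp add: power_mult)
  have "(\<integral>E. ((norm a)\<^sup>2 - (norm (proj (h E) a))\<^sup>2) ^ d \<partial>M1) =
      (\<integral>E. ((norm a)\<^sup>2 - (norm (proj (h E) a))\<^sup>2) ^ d \<partial>M2)"
  proof (rule moments_eq_imp_integral_power_diff_eq[OF M1 M2 sets, where C="(norm a)\<^sup>2"])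
    show "(\<lambda>E. (norm (proj (h E) a))\<^sup>2) \<in> borel_measurable M1" using meas[of a] by measurable
    show "\<bar>(norm (proj (h E) a))\<^sup>2\<bar> \<le> (norm a)\<^sup>2" if "E \<in> space M1" for E
      using norm_proj_le[OF h[OF that], of a] by (simp add: power_mono)
    show "(\<integral>E. ((norm (proj (h E) a))\<^sup>2) ^ i \<partial>M1) = (\<integral>E. ((norm (proj (h E) a))\<^sup>2) ^ i \<partial>M2)" for i
      using eq by (simp add: power_mult[symmetric])
  qed
  moreover have "(\<integral>E. norm (proj (orthogonal_comp (h E)) a) ^ (2 * d) \<partial>M) =
      (\<integral>E. ((norm a)\<^sup>2 - (norm (proj (h E) a))\<^sup>2) ^ d \<partial>M)" if "space M = space M1" for M
    using pyth that by (intro Bochner_Integration.integral_cong) auto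
  ultimately show ?thesis using sets_eq_imp_space_eq[OF sets] by simp
qed

lemma even_moments_eq_iff_even_moments_orthogonal_comp_eq:
  fixes M1 M2 :: "'a::euclidean_space set measure"
  assumes M1: "grass_measure M1 m" and M2: "grass_measure M2 m"
  shows "(\<forall>a d. (\<integral>E. norm (proj E a) ^ (2 * d) \<partial>M1) = (\<integral>E. norm (proj E a) ^ (2 * d) \<partial>M2)) \<longleftrightarrow>
    (\<forall>a d. (\<integral>E. norm (proj (orthogonal_comp E) a) ^ (2 * d) \<partial>M1) =
           (\<integral>E. norm (proj (orthogonal_comp E) a) ^ (2 * d) \<partial>M2))"
proof -
  interpret M1: grass_measure M1 m by (rule M1)
  interpret M2: grass_measure M2 m by (rule M2)
  have sets: "sets M1 = sets M2" by (simp add: M1.sets_eq M2.sets_eq)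
  have "(\<lambda>E. norm (proj (orthogonal_comp E) a)) \<in> borel_measurable (grass_borel m)" for a
    using measurable_comp[OF measurable_orthogonal_comp[OF refl] borel_measurable_norm_proj]
    by (simp add: comp_def)
  then have meas: "(\<lambda>E. norm (proj (orthogonal_comp E) a)) \<in> borel_measurable M1" for a
    using measurable_cong_sets[OF M1.sets_eq refl] by blast
  have biorth: "(\<integral>E. norm (proj (orthogonal_comp (orthogonal_comp E)) a) ^ n \<partial>M) =
      (\<integral>E. norm (proj E a) ^ n \<partial>M)" if "space M = space M1" for M :: "'a set measure" and a n
    using orthogonal_comp_self[OF M1.subspace_in_space(1)] that
    by (intro Bochner_Integration.integral_cong) auto
  show ?thesis
  proof (intro iffI allI)
    fix a d assume "\<forall>a d. (\<integral>E. norm (proj E a) ^ (2 * d) \<partial>M1) = (\<integral>E. norm (proj E a) ^ (2 * d) \<partial>M2)"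
    then show "(\<integral>E. norm (proj (orthogonal_comp E) a) ^ (2 * d) \<partial>M1) =
        (\<integral>E. norm (proj (orthogonal_comp E) a) ^ (2 * d) \<partial>M2)"
      by (intro even_moments_eq_imp_even_moments_orthogonal_comp_eq[OF M1.finite_measure_axioms
          M2.finite_measure_axioms sets, of "\<lambda>E. E"] M1.subspace_in_space(1) M1.borel_measurable_norm_proj_M)
         simp_all
  next
    fix a d
    assume "\<forall>a d. (\<integral>E. norm (proj (orthogonal_comp E) a) ^ (2 * d) \<partial>M1) =
        (\<integral>E. norm (proj (orthogonal_comp E) a) ^ (2 * d) \<partial>M2)"
    then have "(\<integral>E. norm (proj (orthogonal_comp (orthogonal_comp E)) a) ^ (2 * d) \<partial>M1) =
        (\<integral>E. norm (proj (orthogonal_comp (orthogonal_comp E)) a) ^ (2 * d) \<partial>M2)"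
      by (intro even_moments_eq_imp_even_moments_orthogonal_comp_eq[OF M1.finite_measure_axioms
          M2.finite_measure_axioms sets, of orthogonal_comp] subspace_orthogonal_comp meas)
         simp
    then show "(\<integral>E. norm (proj E a) ^ (2 * d) \<partial>M1) = (\<integral>E. norm (proj E a) ^ (2 * d) \<partial>M2)"
      using biorth[of M1] biorth[of M2] sets_eq_imp_space_eq[OF sets] by simp
  qed
qed

theorem mainTheorem10:
  assumes "1 \<le> k" and "k \<le> DIM('a::euclidean_space) - 1"
  shows "(ker_Rstar (DIM('a) - k) :: ('a set measure \<times> 'a set measure) set) =
         {\<mu> \<in> signed_measures (grass_borel (DIM('a) - k)). perp_measure k \<mu> \<in> ker_Rstar k}"
proof -
  define m where "m = DIM('a) - k"
  have m: "1 \<le> m" "m \<le> DIM('a)" and k: "k = DIM('a) - m" using assms by (auto simp: m_def)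
  have "\<mu> \<in> ker_Rstar m \<longleftrightarrow> \<mu> \<in> signed_measures (grass_borel m) \<and> perp_measure k \<mu> \<in> ker_Rstar k"
    for \<mu> :: "'a set measure \<times> 'a set measure"
  proof (cases "\<mu> \<in> signed_measures (grass_borel m)")
    case True
    then show ?thesis
      using ker_Rstar_iff_even_moments_eq[OF m] perp_measure_in_ker_Rstar_iff[OF True k assms(1)]
        even_moments_eq_iff_even_moments_orthogonal_comp_eq[OF grass_measure_signed_measures[OF True m]]
      by simp
  qed (simp add: ker_Rstar_iff_even_moments_eq[OF m])
  then show ?thesis by (auto simp: m_def)
qed

end
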